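(* Fix $\kappa\ge20$, $\delta>0$ and constants $\mathcal{C},\beta,R>0$. For the function $d_*(T,\delta)$ defined in the context, let $$T_2(\delta)=\inf\Big\{T\ \Big|\ d_*(t,\delta)\le\frac{\kappa\,d_*(t/\kappa^2,\delta)}{8}\ \text{ for all } t\ge T\Big\}.$$ Then $T_2(\delta)<\infty$.
   Context: $M=(C,A,B)$ with $C\in\mathbb{R}^{p\times n}$, $A\in\mathbb{R}^{n\times n}$, $B\in\mathbb{R}^{n\times m}$, $\rho(A)<1$. $\mathcal{H}_{0,a,b}$ is the block Hankel matrix with $(i,j)$ block $CA^{i+j-2}B$ ($a=b=\infty$ allowed), and finite Hankel matrices are compared with $\mathcal{H}_{0,\infty,\infty}$ after zero padding to doubly infinite matrices (operator norm on $\ell^2$). For $T>0$, $$d_*(T,\delta)=\inf\Big\{d\in\mathbb{Z}_{\ge1}\ \Big|\ \mathcal{C}\beta R\sqrt d\sqrt{\frac{pd+\log(T/\delta)}{T}}\ge\|\mathcal{H}_{0,d,d}-\mathcal{H}_{0,\infty,\infty}\|_2\Big\}.$$ *)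

theory Defs
  imports "HOL-Analysis.Analysis" "Jordan_Normal_Form.Spectral_Radius"
begin

text \<open>Scalar entry of the block Hankel matrix: block (i,j) (0-indexed) is C A^(i+j) B.\<close>
definition hankel_entry :: "real mat \<Rightarrow> real mat \<Rightarrow> real mat \<Rightarrow> nat \<Rightarrow> nat \<Rightarrow> real" where
  "hankel_entry C A B r c =
     (let p = dim_row C; m = dim_col B
      in (C * (A ^\<^sub>m (r div p + c div m)) * B) $$ (r mod p, c mod m))"

text \<open>H_{0,a,b} zero-padded: blocks (i,j) with i < a, j < b kept, others zero.\<close>
definition hankel_fin :: "real mat \<Rightarrow> real mat \<Rightarrow> real mat \<Rightarrow> nat \<Rightarrow> nat \<Rightarrow> nat \<Rightarrow> nat \<Rightarrow> real" where
  "hankel_fin C A B a b r c =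
     (if r div dim_row C < a \<and> c div dim_col B < b then hankel_entry C A B r c else 0)"

definition l2_opnorm :: "(nat \<Rightarrow> nat \<Rightarrow> real) \<Rightarrow> real" where
  "l2_opnorm K = Sup {sqrt (\<Sum>i. (\<Sum>j. K i j * x j)\<^sup>2) | x.
                        summable (\<lambda>j. (x j)\<^sup>2) \<and> (\<Sum>j. (x j)\<^sup>2) \<le> 1}"

definition d_star :: "real mat \<Rightarrow> real mat \<Rightarrow> real mat \<Rightarrow> real \<Rightarrow> real \<Rightarrow> real \<Rightarrow> real \<Rightarrow> real \<Rightarrow> nat" where
  "d_star C A B Cc \<beta> R T \<delta> = Inf {d::nat. d \<ge> 1 \<and>
      Cc * \<beta> * R * sqrt (real d) * sqrt ((real (dim_row C) * real d + ln (T / \<delta>)) / T)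
        \<ge> l2_opnorm (\<lambda>r c. hankel_fin C A B d d r c - hankel_entry C A B r c)}"

definition T2 :: "real mat \<Rightarrow> real mat \<Rightarrow> real mat \<Rightarrow> real \<Rightarrow> real \<Rightarrow> real \<Rightarrow> real \<Rightarrow> real \<Rightarrow> ereal" where
  "T2 C A B Cc \<beta> R \<kappa> \<delta> = Inf {ereal T | T. T > 0 \<and> (\<forall>t \<ge> T.
      real (d_star C A B Cc \<beta> R t \<delta>) \<le> \<kappa> * real (d_star C A B Cc \<beta> R (t / \<kappa>\<^sup>2) \<delta>) / 8)}"

end

theory Submission
  imports Defs "HOL-Real_Asymp.Real_Asymp"
begin

text \<open>The entries of \<open>C A\<^sup>k B\<close> satisfy a common linear recurrence. Ordering its characteristic
  roots by modulus, either all entries vanish eventually, or a dominant root of some modulus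
  \<open>\<sigma> \<in> (0, 1)\<close> survives. In the first case the norm \<open>g d\<close> of the tail
  \<open>H_{0,d,d} - H_{0,\<infinity>,\<infinity>}\<close> vanishes for large \<open>d\<close>, and \<open>d_*(T)\<close> is eventually constant.
  In the second case \<open>c \<sigma> ^ d \<le> g d \<le> M (sqrt \<sigma>) ^ d\<close>: from below because the tail contains
  single entries of that size, from above by its Hilbert-Schmidt norm. As the statistical term
  decays like \<open>sqrt (log T / T)\<close>, \<open>d_*(T)\<close> then grows like \<open>log T / log (1/\<sigma>)\<close> up to a
  bounded factor, which \<open>\<kappa>/8\<close> absorbs.\<close>

section \<open>Linear recurrences and shift operators\<close>

definition shift_sub :: "complex \<Rightarrow> (nat \<Rightarrow> complex) \<Rightarrow> nat \<Rightarrow> complex" where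
  "shift_sub \<mu> f k = f (Suc k) - \<mu> * f k"

fun shift_subs :: "complex list \<Rightarrow> (nat \<Rightarrow> complex) \<Rightarrow> nat \<Rightarrow> complex" where
  "shift_subs [] f = f"
| "shift_subs (\<mu> # \<mu>s) f = shift_sub \<mu> (shift_subs \<mu>s f)"

lemma shift_sub_commute: "shift_sub \<mu> (shift_sub \<nu> f) = shift_sub \<nu> (shift_sub \<mu> f)"
  by (rule ext) (simp add: shift_sub_def algebra_simps)

lemma shift_subs_append: "shift_subs (\<mu>s @ \<nu>s) f = shift_subs \<mu>s (shift_subs \<nu>s f)"
  by (induction \<mu>s) simp_all

lemma shift_subs_zero: "shift_subs \<mu>s (\<lambda>_. 0) = (\<lambda>_. 0)"
  by (induction \<mu>s) (simp_all add: shift_sub_def)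

lemma shift_subs_remove1:
  "\<mu> \<in> set \<mu>s \<Longrightarrow> shift_subs \<mu>s f = shift_sub \<mu> (shift_subs (remove1 \<mu> \<mu>s) f)"
  by (induction \<mu>s) (auto simp: shift_sub_commute)

lemma shift_subs_perm: "mset \<mu>s = mset \<nu>s \<Longrightarrow> shift_subs \<mu>s f = shift_subs \<nu>s f"
proof (induction \<mu>s arbitrary: \<nu>s)
  case (Cons \<mu> \<mu>s)
  have mem: "\<mu> \<in> set \<nu>s" using Cons.prems by (metis list.set_intros(1) set_mset_mset)
  have "mset \<mu>s = mset (remove1 \<mu> \<nu>s)"
    by (simp add: mset_remove1 flip: Cons.prems)
  then have "shift_subs \<mu>s f = shift_subs (remove1 \<mu> \<nu>s) f" by (rule Cons.IH)
  then show ?case using shift_subs_remove1[OF mem] by simp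
qed simp

lemma shift_subs_zero_roots:
  "\<forall>\<mu>\<in>set \<mu>s. \<mu> = 0 \<Longrightarrow> shift_subs \<mu>s f k = f (k + length \<mu>s)"
  by (induction \<mu>s arbitrary: k) (auto simp: shift_sub_def)

lemma shift_sub_eq_0_geometric: "shift_sub a s = (\<lambda>_. 0) \<Longrightarrow> s k = a ^ k * s 0"
proof (induction k)
  case (Suc k)
  then show ?case using fun_cong[OF Suc.prems, of k] by (simp add: shift_sub_def)
qed simp

lemma norm_shift_subs_le:
  assumes "\<forall>\<mu>\<in>set \<mu>s. norm \<mu> \<le> r" and "\<And>j. j \<le> length \<mu>s \<Longrightarrow> norm (f (k + j)) \<le> b"
  shows "norm (shift_subs \<mu>s f k) \<le> (1 + r) ^ length \<mu>s * b"
  using assms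
proof (induction \<mu>s arbitrary: k)
  case Nil
  then show ?case using Nil(2)[of 0] by simp
next
  case (Cons \<mu> \<mu>s)
  have "norm \<mu> \<le> r" using Cons.prems by simp
  then have r: "0 \<le> r" using norm_ge_zero[of \<mu>] by linarith
  have "norm (f (k + 0)) \<le> b" by (rule Cons.prems(2)) simp
  then have b: "0 \<le> b" using norm_ge_zero[of "f (k + 0)"] by linarith
  have IH: "norm (shift_subs \<mu>s f (k + i)) \<le> (1 + r) ^ length \<mu>s * b" if "i \<le> 1" for i
    using Cons.prems that by (intro Cons.IH) (auto simp: add.assoc)
  have "norm (shift_subs (\<mu> # \<mu>s) f k)
      \<le> norm (shift_subs \<mu>s f (k + 1)) + norm (\<mu> * shift_subs \<mu>s f (k + 0))"
    by (simp add: shift_sub_def norm_triangle_ineq4)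
  also have "\<dots> = norm (shift_subs \<mu>s f (k + 1)) + norm \<mu> * norm (shift_subs \<mu>s f (k + 0))"
    by (simp add: norm_mult)
  also have "\<dots> \<le> (1 + r) ^ length \<mu>s * b + r * ((1 + r) ^ length \<mu>s * b)"
    using IH[of 0] IH[of 1] Cons.prems(1) r b by (intro add_mono mult_mono) auto
  finally show ?case by (simp add: algebra_simps)
qed

lemma shift_sub_geometric_bound:
  fixes f :: "'i \<Rightarrow> nat \<Rightarrow> complex"
  assumes "finite I" and "norm \<mu> \<le> r" and "r < \<theta>"
    and "\<And>i k. i \<in> I \<Longrightarrow> norm (shift_sub \<mu> (f i) k) \<le> M * \<theta> ^ k"
  shows "\<exists>K. \<forall>i\<in>I. \<forall>k. norm (f i k) \<le> K * \<theta> ^ k"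
proof -
  define K where "K = max (\<Sum>i\<in>I. norm (f i 0)) (M / (\<theta> - r))"
  have r: "0 \<le> r" using assms(2) norm_ge_zero[of \<mu>] by linarith
  have "M = (\<theta> - r) * (M / (\<theta> - r))" using assms(3) by simp
  also have "\<dots> \<le> (\<theta> - r) * K" using assms(3) unfolding K_def by (intro mult_left_mono) auto
  finally have step: "r * K + M \<le> \<theta> * K" by (simp add: algebra_simps)
  have "norm (f i k) \<le> K * \<theta> ^ k" if i: "i \<in> I" for i k
  proof (induction k)
    case 0
    show ?case using member_le_sum[OF i _ assms(1), of "\<lambda>i. norm (f i 0)"] by (simp add: K_def)
  next
    case (Suc k)
    have "f i (Suc k) = shift_sub \<mu> (f i) k + \<mu> * f i k" by (simp add: shift_sub_def)
    then have "norm (f i (Suc k)) \<le> norm (shift_sub \<mu> (f i) k) + norm \<mu> * norm (f i k)"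
      by (metis norm_mult norm_triangle_ineq)
    also have "\<dots> \<le> M * \<theta> ^ k + r * (K * \<theta> ^ k)"
      using assms(2) assms(4)[OF i, of k] Suc r by (intro add_mono mult_mono) auto
    also have "\<dots> = (r * K + M) * \<theta> ^ k" by (simp add: algebra_simps)
    also have "\<dots> \<le> (\<theta> * K) * \<theta> ^ k" using step r assms(3) by (intro mult_right_mono) auto
    finally show ?case by (simp add: algebra_simps)
  qed
  then show ?thesis by blast
qed

lemma shift_subs_geometric_bound:
  fixes f :: "'i \<Rightarrow> nat \<Rightarrow> complex"
  assumes "finite I" and "\<forall>\<mu>\<in>set \<mu>s. norm \<mu> \<le> r" and "r < \<theta>"
    and "\<And>i k. i \<in> I \<Longrightarrow> norm (shift_subs \<mu>s (f i) k) \<le> M * \<theta> ^ k"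
  shows "\<exists>K. \<forall>i\<in>I. \<forall>k. norm (f i k) \<le> K * \<theta> ^ k"
  using assms(2,4)
proof (induction \<mu>s arbitrary: M)
  case (Cons \<mu> \<mu>s)
  have "\<exists>K. \<forall>i\<in>I. \<forall>k. norm (shift_subs \<mu>s (f i) k) \<le> K * \<theta> ^ k"
    using Cons.prems by (intro shift_sub_geometric_bound[OF assms(1) _ assms(3)]) auto
  then obtain K where "\<And>i k. i \<in> I \<Longrightarrow> norm (shift_subs \<mu>s (f i) k) \<le> K * \<theta> ^ k" by blast
  then show ?case using Cons.IH[of K] Cons.prems(1) by simp
qed auto

lemma shift_subs_peel:
  assumes "\<forall>i\<in>I. shift_subs \<mu>s (f i) = (\<lambda>_. 0)" and "\<exists>i\<in>I. f i \<noteq> (\<lambda>_. 0)"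
  shows "\<exists>j a \<nu>s. drop j \<mu>s = a # \<nu>s \<and> (\<forall>i\<in>I. shift_subs (a # \<nu>s) (f i) = (\<lambda>_. 0))
           \<and> (\<exists>i\<in>I. shift_subs \<nu>s (f i) \<noteq> (\<lambda>_. 0))"
  using assms(1)
proof (induction \<mu>s)
  case (Cons \<mu> \<mu>s)
  show ?case
  proof (cases "\<forall>i\<in>I. shift_subs \<mu>s (f i) = (\<lambda>_. 0)")
    case True
    from Cons.IH[OF True] obtain j a \<nu>s where "drop j \<mu>s = a # \<nu>s"
      "\<forall>i\<in>I. shift_subs (a # \<nu>s) (f i) = (\<lambda>_. 0)" "\<exists>i\<in>I. shift_subs \<nu>s (f i) \<noteq> (\<lambda>_. 0)"
      by blast
    then show ?thesis by (intro exI[of _ "Suc j"] exI[of _ a] exI[of _ \<nu>s]) simp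
  next
    case False
    then show ?thesis using Cons.prems by (intro exI[of _ 0] exI[of _ \<mu>] exI[of _ \<mu>s]) simp
  qed
qed (use assms(2) in simp)

text \<open>Factors ordered by decreasing modulus: peeling from the left isolates a dominant root \<open>a\<close>
  whose geometric mode \<open>a ^ k\<close> actually occurs in the family.\<close>

lemma shift_subs_dominant_root:
  assumes "\<forall>i\<in>I. shift_subs \<mu>s (f i) = (\<lambda>_. 0)" and "\<exists>i\<in>I. f i \<noteq> (\<lambda>_. 0)"
  obtains a \<nu>s where "a \<in> set \<mu>s" and "length \<nu>s < length \<mu>s" and "\<forall>\<nu>\<in>set \<nu>s. norm \<nu> \<le> norm a"
    and "\<forall>i\<in>I. shift_sub a (shift_subs \<nu>s (f i)) = (\<lambda>_. 0)"
    and "\<exists>i\<in>I. shift_subs \<nu>s (f i) \<noteq> (\<lambda>_. 0)"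
proof -
  define \<rho>s where "\<rho>s = rev (sort_key norm \<mu>s)"
  have mset: "mset \<rho>s = mset \<mu>s" by (simp add: \<rho>s_def)
  then have "\<forall>i\<in>I. shift_subs \<rho>s (f i) = (\<lambda>_. 0)" using assms(1) shift_subs_perm by metis
  from shift_subs_peel[OF this assms(2)] obtain j a \<nu>s where drop: "drop j \<rho>s = a # \<nu>s"
    and "\<forall>i\<in>I. shift_subs (a # \<nu>s) (f i) = (\<lambda>_. 0)" and "\<exists>i\<in>I. shift_subs \<nu>s (f i) \<noteq> (\<lambda>_. 0)"
    by blast
  moreover have "sorted_wrt (\<lambda>x y. norm x \<le> norm y) (sort_key norm \<mu>s)"
    using sorted_sort_key[of norm \<mu>s] by (simp add: sorted_wrt_map)
  then have "sorted_wrt (\<lambda>x y. norm y \<le> norm x) \<rho>s"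
    unfolding \<rho>s_def by (simp add: sorted_wrt_rev)
  then have "sorted_wrt (\<lambda>x y. norm y \<le> norm x) (a # \<nu>s)" by (metis drop sorted_wrt_drop)
  moreover have "a \<in> set \<rho>s" using drop by (metis in_set_dropD list.set_intros(1))
  then have "a \<in> set \<mu>s" using mset by (metis set_mset_mset)
  moreover have "length (a # \<nu>s) \<le> length \<rho>s" unfolding drop[symmetric] by simp
  then have "length \<nu>s < length \<mu>s" using mset_eq_length[OF mset] by simp
  ultimately show ?thesis using that by simp
qed

lemma dominant_root_lower_bound:
  assumes "shift_sub a (shift_subs \<nu>s f) = (\<lambda>_. 0)" and "shift_subs \<nu>s f \<noteq> (\<lambda>_. 0)"
    and "\<forall>\<nu>\<in>set \<nu>s. norm \<nu> \<le> norm a"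
  shows "\<exists>c>0. \<forall>k. \<exists>j\<le>length \<nu>s. c * norm a ^ k \<le> norm (f (k + j))"
proof -
  define s where "s = shift_subs \<nu>s f"
  have s: "s k = a ^ k * s 0" for k using shift_sub_eq_0_geometric assms(1) unfolding s_def .
  have s0: "s 0 \<noteq> 0"
  proof
    assume "s 0 = 0"
    then have "s = (\<lambda>_. 0)" using s by (metis mult_zero_right)
    then show False using assms(2) unfolding s_def by simp
  qed
  define c where "c = norm (s 0) / (2 * (1 + norm a) ^ length \<nu>s)"
  have c: "c > 0" using s0 by (simp add: c_def add_pos_nonneg)
  moreover have "\<exists>j\<le>length \<nu>s. c * norm a ^ k \<le> norm (f (k + j))" for k
  proof (rule ccontr)
    assume neg: "\<not> ?thesis"
    then have small: "norm (f (k + j)) \<le> c * norm a ^ k" if "j \<le> length \<nu>s" for j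
      using that by force
    have "\<not> c * norm a ^ k \<le> norm (f (k + 0))" using neg by blast
    then have "0 < c * norm a ^ k" using norm_ge_zero[of "f (k + 0)"] by linarith
    then have pos: "0 < norm (s k)" using c s0 s[of k] by (simp add: norm_mult norm_power zero_less_mult_iff)
    have "norm (s k) \<le> (1 + norm a) ^ length \<nu>s * (c * norm a ^ k)"
      unfolding s_def by (rule norm_shift_subs_le[where f = f and k = k, OF assms(3) small])
    also have "\<dots> = norm (s k) / 2"
      using s[of k] norm_ge_zero[of a] by (simp add: c_def norm_mult norm_power add_nonneg_eq_0_iff)
    finally show False using pos by simp
  qed
  ultimately show ?thesis by blast
qed

lemma annihilated_family_dichotomy:
  fixes f :: "'i \<Rightarrow> nat \<Rightarrow> complex"
  assumes "finite I" and "\<forall>i\<in>I. shift_subs \<mu>s (f i) = (\<lambda>_. 0)"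
  shows "(\<forall>i\<in>I. \<forall>k\<ge>length \<mu>s. f i k = 0) \<or>
    (\<exists>\<sigma>\<in>norm ` set \<mu>s. \<sigma> > 0
       \<and> (\<exists>c>0. \<forall>k. \<exists>i\<in>I. \<exists>j\<le>length \<mu>s. c * \<sigma> ^ k \<le> norm (f i (k + j)))
       \<and> (\<forall>\<theta>>\<sigma>. \<exists>M. \<forall>i\<in>I. \<forall>k. norm (f i k) \<le> M * \<theta> ^ k))"
proof (cases "\<forall>i\<in>I. f i = (\<lambda>_. 0)")
  case False
  then obtain a \<nu>s where a: "a \<in> set \<mu>s" and len: "length \<nu>s < length \<mu>s"
    and dom: "\<forall>\<nu>\<in>set \<nu>s. norm \<nu> \<le> norm a"
    and ann: "\<forall>i\<in>I. shift_sub a (shift_subs \<nu>s (f i)) = (\<lambda>_. 0)"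
    and nz: "\<exists>i\<in>I. shift_subs \<nu>s (f i) \<noteq> (\<lambda>_. 0)"
    using shift_subs_dominant_root[OF assms(2)] by blast
  show ?thesis
  proof (cases "a = 0")
    case True
    then have "\<forall>\<nu>\<in>set (a # \<nu>s). \<nu> = 0" using dom by auto
    then have zero: "f i (k + length (a # \<nu>s)) = 0" if "i \<in> I" for i k
      using shift_subs_zero_roots[of "a # \<nu>s" "f i" k] ann that by simp
    have "f i k = 0" if "i \<in> I" "k \<ge> length \<mu>s" for i k
    proof -
      have "(k - length (a # \<nu>s)) + length (a # \<nu>s) = k" using that(2) len by simp
      with zero[OF that(1), of "k - length (a # \<nu>s)"] show ?thesis by simp
    qed
    then show ?thesis by blast
  next
    case False
    obtain i where i: "i \<in> I" "shift_subs \<nu>s (f i) \<noteq> (\<lambda>_. 0)" using nz by blast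
    then obtain c where "c > 0" "\<forall>k. \<exists>j\<le>length \<nu>s. c * norm a ^ k \<le> norm (f i (k + j))"
      using dominant_root_lower_bound[OF _ _ dom] ann by blast
    then have c: "c > 0" "\<forall>k. \<exists>i\<in>I. \<exists>j\<le>length \<mu>s. c * norm a ^ k \<le> norm (f i (k + j))"
      using i(1) len by (meson le_trans less_imp_le_nat)+
    have "\<forall>\<theta>>norm a. \<exists>M. \<forall>i\<in>I. \<forall>k. norm (f i k) \<le> M * \<theta> ^ k"
      using ann dom by (intro allI impI shift_subs_geometric_bound[OF assms(1),
          where \<mu>s = "a # \<nu>s" and r = "norm a" and M = 0]) auto
    then show ?thesis using a c False by (intro disjI2 bexI[of _ "norm a"]) auto
  qed
qed simp

definition poly_shift :: "complex poly \<Rightarrow> (nat \<Rightarrow> complex) \<Rightarrow> nat \<Rightarrow> complex" where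
  "poly_shift q f k = (\<Sum>i\<le>degree q. coeff q i * f (k + i))"

lemma poly_shift_eq_sum:
  assumes "degree q < N"
  shows "poly_shift q f k = (\<Sum>i<N. coeff q i * f (k + i))"
  unfolding poly_shift_def
  by (rule sum.mono_neutral_left) (use assms in \<open>auto simp: coeff_eq_0\<close>)

lemma poly_shift_smult: "poly_shift (Polynomial.smult c q) f k = c * poly_shift q f k"
proof -
  have "degree (Polynomial.smult c q) < Suc (degree q)" using degree_smult_le[of c q] by linarith
  then have "poly_shift (Polynomial.smult c q) f k
      = (\<Sum>i<Suc (degree q). coeff (Polynomial.smult c q) i * f (k + i))"
    by (rule poly_shift_eq_sum)
  also have "\<dots> = c * poly_shift q f k"
    by (simp only: poly_shift_eq_sum[OF lessI] coeff_smult sum_distrib_left mult.assoc)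
  finally show ?thesis .
qed

lemma poly_shift_linear_factor: "poly_shift ([:-a, 1:] * q) f = shift_sub a (poly_shift q f)"
proof
  fix k
  let ?N = "Suc (degree q)"
  have coeff: "coeff ([:-a, 1:] * q) i = coeff (pCons 0 q) i - a * coeff q i" for i
  proof -
    have "[:-a, 1:] * q = Polynomial.smult (-a) q + pCons 0 q" by simp
    then show ?thesis by simp
  qed
  have "poly_shift ([:-a, 1:] * q) f k = (\<Sum>i<Suc ?N. coeff ([:-a, 1:] * q) i * f (k + i))"
    by (rule poly_shift_eq_sum) (use degree_mult_le[of "[:-a, 1:]" q] in simp)
  also have "\<dots> = (\<Sum>i<Suc ?N. coeff (pCons 0 q) i * f (k + i))
      - a * (\<Sum>i<Suc ?N. coeff q i * f (k + i))"
    by (simp only: coeff left_diff_distrib sum_subtractf sum_distrib_left mult.assoc)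
  also have "(\<Sum>i<Suc ?N. coeff (pCons 0 q) i * f (k + i)) = (\<Sum>i<?N. coeff q i * f (Suc k + i))"
    by (subst sum.lessThan_Suc_shift) simp
  also have "(\<Sum>i<Suc ?N. coeff q i * f (k + i)) = (\<Sum>i<?N. coeff q i * f (k + i))"
    by (subst sum.lessThan_Suc) (simp add: coeff_eq_0)
  also have "(\<Sum>i<?N. coeff q i * f (Suc k + i)) - a * (\<Sum>i<?N. coeff q i * f (k + i))
      = shift_sub a (poly_shift q f) k"
    unfolding shift_sub_def poly_shift_eq_sum[OF lessI] ..
  finally show "poly_shift ([:-a, 1:] * q) f k = shift_sub a (poly_shift q f) k" .
qed

lemma poly_shift_linear_factors: "poly_shift (\<Prod>a\<leftarrow>as. [:- a, 1:]) f = shift_subs as f"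
proof (induction as)
  case Nil
  show ?case by (rule ext) (simp add: poly_shift_def)
next
  case (Cons a as)
  then show ?case by (simp only: list.map prod_list.Cons poly_shift_linear_factor shift_subs.simps)
qed

lemma linear_recurrence_annihilated:
  fixes f :: "nat \<Rightarrow> complex"
  assumes "\<exists>i\<le>n. \<alpha> i \<noteq> 0" and "\<And>k. (\<Sum>i\<le>n. \<alpha> i * f (k + i)) = 0"
  shows "\<exists>\<mu>s. shift_subs \<mu>s f = (\<lambda>_. 0)"
proof -
  define q where "q = (\<Sum>i\<le>n. monom (\<alpha> i) i)"
  have coeff: "coeff q i = (if i \<le> n then \<alpha> i else 0)" for i
    unfolding q_def by (simp add: coeff_sum coeff_monom)
  have "q \<noteq> 0" using assms(1) coeff by (metis coeff_0)
  then have lc: "lead_coeff q \<noteq> 0" by simp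
  have "degree q < Suc n" using coeff by (intro le_less_trans[OF degree_le[of n]]) auto
  then have "poly_shift q f k = 0" for k
    using assms(2)[of k] by (simp add: poly_shift_eq_sum coeff lessThan_Suc_atMost)
  moreover obtain as where "Polynomial.smult (lead_coeff q) (\<Prod>a\<leftarrow>as. [:- a, 1:]) = q"
    using fundamental_theorem_algebra_factorized by blast
  then have "poly_shift q f k = lead_coeff q * shift_subs as f k" for k
    by (metis poly_shift_smult poly_shift_linear_factors)
  ultimately have "shift_subs as f = (\<lambda>_. 0)" using lc by auto
  then show ?thesis ..
qed

lemma finite_family_annihilated:
  assumes "finite I" and "\<And>i. i \<in> I \<Longrightarrow> \<exists>\<mu>s. shift_subs \<mu>s (f i) = (\<lambda>_. 0)"
  shows "\<exists>\<mu>s. \<forall>i\<in>I. shift_subs \<mu>s (f i) = (\<lambda>_. 0)"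
  using assms
proof (induction I rule: finite_induct)
  case (insert x I)
  obtain \<mu>s where \<mu>s: "\<forall>i\<in>I. shift_subs \<mu>s (f i) = (\<lambda>_. 0)" using insert by blast
  obtain \<nu>s where \<nu>s: "shift_subs \<nu>s (f x) = (\<lambda>_. 0)" using insert.prems by blast
  have "shift_subs (\<nu>s @ \<mu>s) (f i) = (\<lambda>_. 0)" if "i \<in> insert x I" for i
  proof (cases "i = x")
    case True
    have "shift_subs (\<nu>s @ \<mu>s) (f i) = shift_subs (\<mu>s @ \<nu>s) (f i)" by (rule shift_subs_perm) simp
    then show ?thesis using True \<nu>s by (simp add: shift_subs_append shift_subs_zero)
  next
    case False
    then show ?thesis using that \<mu>s by (simp add: shift_subs_append shift_subs_zero)
  qed
  then show ?case by blast
qed simp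

lemma geometric_le_imp_base_le:
  fixes \<sigma> \<theta> c M :: real
  assumes "\<And>k. c * \<sigma> ^ k \<le> M * \<theta> ^ k" and "0 < c" and "0 < \<sigma>" and "0 \<le> \<theta>"
  shows "\<sigma> \<le> \<theta>"
proof (rule ccontr)
  assume "\<not> \<sigma> \<le> \<theta>"
  then have "(\<lambda>k. M * (\<theta> / \<sigma>) ^ k) \<longlonglongrightarrow> M * 0"
    using assms(3,4) by (intro tendsto_mult tendsto_const LIMSEQ_power_zero) auto
  then have "eventually (\<lambda>k. M * (\<theta> / \<sigma>) ^ k < c) sequentially"
    using assms(2) by (simp add: order_tendstoD(2))
  then obtain k where "M * (\<theta> / \<sigma>) ^ k < c" by (auto simp: eventually_sequentially)
  moreover have "c \<le> M * (\<theta> / \<sigma>) ^ k"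
    using assms(1)[of k] assms(3) by (simp add: power_divide pos_le_divide_eq)
  ultimately show False by simp
qed

section \<open>Entries of matrix powers\<close>

lemma pow_mat_add:
  assumes "A \<in> carrier_mat n n"
  shows "A ^\<^sub>m (k + i) = A ^\<^sub>m k * A ^\<^sub>m i"
proof (induction i)
  case (Suc i)
  have "A ^\<^sub>m (k + Suc i) = (A ^\<^sub>m k * A ^\<^sub>m i) * A" using Suc by simp
  also have "\<dots> = A ^\<^sub>m k * (A ^\<^sub>m i * A)" using assms by (intro assoc_mult_mat) auto
  finally show ?case by simp
qed (use assms in simp)

text \<open>Write the \<open>n + 1\<close> vectors as the columns of a square matrix whose last row repeats
  row \<open>0\<close>; it is singular.\<close>

lemma Suc_vectors_dependent:
  fixes v :: "nat \<Rightarrow> nat \<Rightarrow> 'a::field"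
  shows "\<exists>\<alpha>. (\<exists>i\<le>n. \<alpha> i \<noteq> 0) \<and> (\<forall>l<n. (\<Sum>i\<le>n. v i l * \<alpha> i) = 0)"
proof (cases "n = 0")
  case False
  define W where "W = mat (Suc n) (Suc n) (\<lambda>(r, i). v i (if r < n then r else 0))"
  have W: "W \<in> carrier_mat (Suc n) (Suc n)" unfolding W_def by simp
  have "row W 0 = row W n" unfolding W_def using False by (intro eq_vecI) auto
  then have "det W = 0" using False by (intro det_identical_rows[OF W, of 0 n]) auto
  then obtain w where w: "w \<in> carrier_vec (Suc n)" "w \<noteq> 0\<^sub>v (Suc n)" "W *\<^sub>v w = 0\<^sub>v (Suc n)"
    using det_0_iff_vec_prod_zero_field[OF W] by blast
  have "\<exists>i\<le>n. w $ i \<noteq> 0"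
  proof (rule ccontr)
    assume "\<not> ?thesis"
    then have "w = 0\<^sub>v (Suc n)" using w(1) by (intro eq_vecI) auto
    then show False using w(2) by simp
  qed
  moreover have "(\<Sum>i\<le>n. v i l * w $ i) = 0" if "l < n" for l
  proof -
    have "(W *\<^sub>v w) $ l = 0" using w(3) that by simp
    then show ?thesis using that w(1)
      unfolding W_def by (simp add: scalar_prod_def atLeast0LessThan lessThan_Suc_atMost)
  qed
  ultimately show ?thesis by blast
qed (intro exI[of _ "\<lambda>_. 1"], simp)

lemma matrix_power_entry_recurrence:
  fixes C A B :: "'a::field mat"
  assumes C: "C \<in> carrier_mat p n" and A: "A \<in> carrier_mat n n" and B: "B \<in> carrier_mat n m"
    and a: "a < p" and b: "b < m"
  shows "\<exists>\<alpha>. (\<exists>i\<le>n. \<alpha> i \<noteq> 0) \<and> (\<forall>k. (\<Sum>i\<le>n. \<alpha> i * (C * A ^\<^sub>m (k + i) * B) $$ (a, b)) = 0)"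
proof -
  obtain \<alpha> where \<alpha>: "\<exists>i\<le>n. \<alpha> i \<noteq> 0"
    and ker: "\<And>l. l < n \<Longrightarrow> (\<Sum>i\<le>n. (A ^\<^sub>m i * B) $$ (l, b) * \<alpha> i) = 0"
    using Suc_vectors_dependent[of n "\<lambda>i l. (A ^\<^sub>m i * B) $$ (l, b)"] by blast
  have entry: "(C * A ^\<^sub>m (k + i) * B) $$ (a, b)
      = (\<Sum>j<n. \<Sum>l<n. C $$ (a, j) * (A ^\<^sub>m k) $$ (j, l) * (A ^\<^sub>m i * B) $$ (l, b))" for k i
  proof -
    have "C * A ^\<^sub>m (k + i) * B = C * (A ^\<^sub>m k * A ^\<^sub>m i) * B" by (simp add: pow_mat_add[OF A])
    also have "\<dots> = C * ((A ^\<^sub>m k * A ^\<^sub>m i) * B)" using A B C by (intro assoc_mult_mat) auto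
    also have "(A ^\<^sub>m k * A ^\<^sub>m i) * B = A ^\<^sub>m k * (A ^\<^sub>m i * B)"
      using A B by (intro assoc_mult_mat) auto
    finally have "C * A ^\<^sub>m (k + i) * B = C * (A ^\<^sub>m k * (A ^\<^sub>m i * B))" .
    then show ?thesis using A B C a b
      by (simp add: scalar_prod_def atLeast0LessThan sum_distrib_left mult.assoc)
  qed
  have "(\<Sum>i\<le>n. \<alpha> i * (C * A ^\<^sub>m (k + i) * B) $$ (a, b)) = 0" for k
  proof -
    have "(\<Sum>i\<le>n. \<alpha> i * (C * A ^\<^sub>m (k + i) * B) $$ (a, b))
        = (\<Sum>j<n. \<Sum>l<n. C $$ (a, j) * (A ^\<^sub>m k) $$ (j, l) * (\<Sum>i\<le>n. (A ^\<^sub>m i * B) $$ (l, b) * \<alpha> i))"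
      unfolding entry sum_distrib_left
      by (subst sum.swap, rule sum.cong[OF refl], subst sum.swap) (simp add: ac_simps)
    also have "\<dots> = 0" using ker by simp
    finally show ?thesis .
  qed
  with \<alpha> show ?thesis by blast
qed

lemma matrix_power_entries_annihilated:
  fixes C A B :: "real mat"
  assumes C: "C \<in> carrier_mat p n" and A: "A \<in> carrier_mat n n" and B: "B \<in> carrier_mat n m"
  shows "\<exists>\<mu>s. \<forall>a<p. \<forall>b<m.
           shift_subs \<mu>s (\<lambda>k. complex_of_real ((C * A ^\<^sub>m k * B) $$ (a, b))) = (\<lambda>_. 0)"
proof -
  have "\<exists>\<mu>s. shift_subs \<mu>s (\<lambda>k. complex_of_real ((C * A ^\<^sub>m k * B) $$ (a, b))) = (\<lambda>_. 0)"
    if ab: "a < p" "b < m" for a b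
  proof -
    obtain \<alpha> where "\<exists>i\<le>n. \<alpha> i \<noteq> 0" and "\<And>k. (\<Sum>i\<le>n. \<alpha> i * (C * A ^\<^sub>m (k + i) * B) $$ (a, b)) = 0"
      using matrix_power_entry_recurrence[OF C A B ab] by blast
    then show ?thesis
      by (intro linear_recurrence_annihilated[where \<alpha> = "\<lambda>i. complex_of_real (\<alpha> i)" and n = n])
        (simp_all flip: of_real_mult of_real_sum)
  qed
  then have "\<exists>\<mu>s. \<forall>x\<in>{..<p} \<times> {..<m}.
      shift_subs \<mu>s ((\<lambda>(a, b) k. complex_of_real ((C * A ^\<^sub>m k * B) $$ (a, b))) x) = (\<lambda>_. 0)"
    by (intro finite_family_annihilated) auto
  then show ?thesis by auto
qed

lemma smult_pow_mat:
  fixes A :: "'a::comm_ring_1 mat"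
  assumes "A \<in> carrier_mat n n"
  shows "(c \<cdot>\<^sub>m A) ^\<^sub>m k = c ^ k \<cdot>\<^sub>m A ^\<^sub>m k"
proof (induction k)
  case (Suc k)
  have "(c \<cdot>\<^sub>m A) ^\<^sub>m Suc k = (c ^ k \<cdot>\<^sub>m A ^\<^sub>m k) * (c \<cdot>\<^sub>m A)" using Suc by simp
  also have "\<dots> = c ^ Suc k \<cdot>\<^sub>m A ^\<^sub>m Suc k"
    using assms by (intro eq_matI) (auto simp: scalar_prod_def sum_distrib_left mult_ac intro!: sum.cong)
  finally show ?case .
qed (use assms in \<open>auto intro: eq_matI\<close>)

lemma eigenvalue_smult_mat:
  fixes A :: "'a::field mat"
  assumes A: "A \<in> carrier_mat n n" and c: "c \<noteq> 0" and "eigenvalue (c \<cdot>\<^sub>m A) \<mu>"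
  shows "eigenvalue A (\<mu> / c)"
proof -
  obtain v where v: "v \<in> carrier_vec n" "v \<noteq> 0\<^sub>v n" and Av: "(c \<cdot>\<^sub>m A) *\<^sub>v v = \<mu> \<cdot>\<^sub>v v"
    using assms(3) A unfolding eigenvalue_def eigenvector_def by auto
  have "A *\<^sub>v v = (\<mu> / c) \<cdot>\<^sub>v v"
  proof (rule eq_vecI)
    fix i assume "i < dim_vec ((\<mu> / c) \<cdot>\<^sub>v v)"
    then have i: "i < n" using v by simp
    have "c * (A *\<^sub>v v) $ i = \<mu> * v $ i"
      using arg_cong[OF Av, of "\<lambda>w. w $ i"] i A v by simp
    then show "(A *\<^sub>v v) $ i = ((\<mu> / c) \<cdot>\<^sub>v v) $ i" using i v c by (simp add: field_simps)
  qed (use A v in simp)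
  then show ?thesis using v A unfolding eigenvalue_def eigenvector_def by auto
qed

lemma pow_mat_norm_bound_geometric:
  fixes A :: "complex mat"
  assumes A: "A \<in> carrier_mat n n" and n: "n > 0" and sr: "spectral_radius A < \<theta>"
  shows "\<exists>c. \<forall>k. norm_bound (A ^\<^sub>m k) (c * \<theta> ^ k)"
proof -
  have "spectral_radius A \<ge> 0" using spectral_radius_mem_max(1)[OF A n] by auto
  then have \<theta>: "\<theta> > 0" using sr by linarith
  define A' where "A' = complex_of_real (1 / \<theta>) \<cdot>\<^sub>m A"
  have A': "A' \<in> carrier_mat n n" unfolding A'_def using A by simp
  have "spectral_radius A' < 1"
  proof -
    obtain \<mu> where \<mu>: "eigenvalue A' \<mu>" and sr': "spectral_radius A' = norm \<mu>"
      using spectral_radius_mem_max(1)[OF A' n] unfolding spectrum_def by auto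
    have "eigenvalue A (\<mu> / complex_of_real (1 / \<theta>))"
      using \<mu> \<theta> unfolding A'_def by (intro eigenvalue_smult_mat[OF A]) auto
    then have "norm (\<mu> / complex_of_real (1 / \<theta>)) \<le> spectral_radius A"
      by (intro spectral_radius_mem_max(2)[OF A n]) (auto simp: spectrum_def)
    then have "\<theta> * norm \<mu> \<le> spectral_radius A" using \<theta> by (simp add: norm_divide norm_mult mult.commute)
    then have "\<theta> * norm \<mu> < \<theta> * 1" using sr by linarith
    then show ?thesis using \<theta> sr' by (simp only: mult_less_cancel_left_pos)
  qed
  then obtain c where c: "\<And>k. norm_bound (A' ^\<^sub>m k) c"
    using spectral_radius_jnf_norm_bound_less_1[OF A'] char_poly_factorized[OF A']
      jordan_nf_exists[OF A'] by blast
  have "norm_bound (A ^\<^sub>m k) (c * \<theta> ^ k)" for k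
  proof
    fix i j assume "i < dim_row (A ^\<^sub>m k)" and "j < dim_col (A ^\<^sub>m k)"
    then have ij: "i < n" "j < n" using A by (auto split: if_splits)
    have "A' ^\<^sub>m k = complex_of_real (1 / \<theta>) ^ k \<cdot>\<^sub>m A ^\<^sub>m k"
      unfolding A'_def by (rule smult_pow_mat[OF A])
    then have "norm ((A' ^\<^sub>m k) $$ (i, j)) = norm ((A ^\<^sub>m k) $$ (i, j)) / \<theta> ^ k"
      using ij A \<theta> by (simp add: norm_mult norm_power norm_divide power_one_over)
    moreover have "norm ((A' ^\<^sub>m k) $$ (i, j)) \<le> c" using c[of k] ij A' unfolding norm_bound_def by auto
    ultimately show "norm ((A ^\<^sub>m k) $$ (i, j)) \<le> c * \<theta> ^ k" using \<theta> by (simp add: divide_le_eq)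
  qed
  then show ?thesis by blast
qed

lemma matrix_power_sandwich_norm_bound:
  fixes C A B :: "complex mat"
  assumes C: "C \<in> carrier_mat p n" and A: "A \<in> carrier_mat n n" and B: "B \<in> carrier_mat n m"
    and "n > 0" and "spectral_radius A < \<theta>"
  shows "\<exists>M. \<forall>k. norm_bound (C * A ^\<^sub>m k * B) (M * \<theta> ^ k)"
proof -
  obtain c where c: "\<And>k. norm_bound (A ^\<^sub>m k) (c * \<theta> ^ k)"
    using pow_mat_norm_bound_geometric[OF A assms(4,5)] by blast
  obtain \<gamma>C \<gamma>B where \<gamma>C: "norm_bound C \<gamma>C" and \<gamma>B: "norm_bound B \<gamma>B" using norm_bound_max by blast
  have CA: "C * A ^\<^sub>m k \<in> carrier_mat p n" for k using C A by simp
  have "norm_bound (C * A ^\<^sub>m k * B) (\<gamma>C * (c * \<theta> ^ k) * real n * \<gamma>B * real n)" for k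
    using norm_bound_mult[OF CA B norm_bound_mult[OF C pow_carrier_mat[OF A] \<gamma>C c] \<gamma>B] .
  then show ?thesis by (intro exI[of _ "\<gamma>C * c * real n * \<gamma>B * real n"]) (simp add: ac_simps)
qed

lemma real_matrix_power_entry_decay:
  fixes C A B :: "real mat"
  assumes C: "C \<in> carrier_mat p n" and A: "A \<in> carrier_mat n n" and B: "B \<in> carrier_mat n m"
    and "n > 0" and "spectral_radius (map_mat complex_of_real A) < \<theta>"
  shows "\<exists>M. \<forall>a b k. a < p \<longrightarrow> b < m \<longrightarrow> \<bar>(C * A ^\<^sub>m k * B) $$ (a, b)\<bar> \<le> M * \<theta> ^ k"
proof -
  let ?h = "map_mat complex_of_real"
  have hom: "?h (C * A ^\<^sub>m k * B) = ?h C * ?h A ^\<^sub>m k * ?h B" for k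
    using C A B by (simp add: of_real_hom.mat_hom_mult[of _ p n _ m] of_real_hom.mat_hom_mult[of _ p n _ n]
        of_real_hom.mat_hom_pow[OF A])
  obtain M where "\<forall>k. norm_bound (?h C * ?h A ^\<^sub>m k * ?h B) (M * \<theta> ^ k)"
    using matrix_power_sandwich_norm_bound[of "?h C" p n "?h A" "?h B" m] assms by auto
  then have "\<bar>(C * A ^\<^sub>m k * B) $$ (a, b)\<bar> \<le> M * \<theta> ^ k" if "a < p" "b < m" for a b k
    using that C B unfolding norm_bound_def hom[symmetric] by (auto elim!: allE[of _ k] allE[of _ a] allE[of _ b])
  then show ?thesis by blast
qed

lemma matrix_power_entry_rate_lt_1:
  fixes C A B :: "real mat"
  assumes C: "C \<in> carrier_mat p n" and A: "A \<in> carrier_mat n n" and B: "B \<in> carrier_mat n m"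
    and n: "n > 0" and sr: "spectral_radius (map_mat complex_of_real A) < 1"
    and c: "0 < c" and \<sigma>: "0 < \<sigma>"
    and low: "\<And>k. \<exists>a<p. \<exists>b<m. \<exists>j. c * \<sigma> ^ k \<le> \<bar>(C * A ^\<^sub>m (k + j) * B) $$ (a, b)\<bar>"
  shows "\<sigma> < 1"
proof -
  define \<theta> where "\<theta> = (1 + spectral_radius (map_mat complex_of_real A)) / 2"
  have "spectral_radius (map_mat complex_of_real A) \<ge> 0"
    using spectral_radius_mem_max(1)[of "map_mat complex_of_real A" n] A n by auto
  then have \<theta>: "0 \<le> \<theta>" "\<theta> < 1" "spectral_radius (map_mat complex_of_real A) < \<theta>"
    using sr unfolding \<theta>_def by auto
  obtain M where M: "\<And>a b k. a < p \<Longrightarrow> b < m \<Longrightarrow> \<bar>(C * A ^\<^sub>m k * B) $$ (a, b)\<bar> \<le> M * \<theta> ^ k"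
    using real_matrix_power_entry_decay[OF C A B n \<theta>(3)] by blast
  have "c * \<sigma> ^ k \<le> M * \<theta> ^ k" for k
  proof -
    obtain a b j where ab: "a < p" "b < m" and lowk: "c * \<sigma> ^ k \<le> \<bar>(C * A ^\<^sub>m (k + j) * B) $$ (a, b)\<bar>"
      using low by blast
    have up: "\<bar>(C * A ^\<^sub>m (k + j) * B) $$ (a, b)\<bar> \<le> M * \<theta> ^ (k + j)" using M[OF ab] .
    have "0 < M * \<theta> ^ (k + j)" using lowk up c \<sigma> by (smt (verit) mult_pos_pos zero_less_power)
    then have "0 < M" using \<theta>(1) by (smt (verit) mult_nonpos_nonneg zero_le_power)
    then have "M * \<theta> ^ (k + j) \<le> M * \<theta> ^ k" using \<theta> by (intro mult_left_mono power_decreasing) auto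
    then show ?thesis using lowk up by linarith
  qed
  then have "\<sigma> \<le> \<theta>" using c \<sigma> \<theta>(1) by (rule geometric_le_imp_base_le)
  then show ?thesis using \<theta>(2) by linarith
qed

lemma matrix_power_entries_dichotomy:
  fixes C A B :: "real mat"
  assumes C: "C \<in> carrier_mat p n" and A: "A \<in> carrier_mat n n" and B: "B \<in> carrier_mat n m"
    and n: "n > 0" and sr: "spectral_radius (map_mat complex_of_real A) < 1"
  shows "(\<exists>L. \<forall>a<p. \<forall>b<m. \<forall>k\<ge>L. (C * A ^\<^sub>m k * B) $$ (a, b) = 0) \<or>
    (\<exists>\<sigma> c. 0 < \<sigma> \<and> \<sigma> < 1 \<and> 0 < c
       \<and> (\<forall>k. \<exists>a<p. \<exists>b<m. \<exists>j. c * \<sigma> ^ k \<le> \<bar>(C * A ^\<^sub>m (k + j) * B) $$ (a, b)\<bar>)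
       \<and> (\<forall>\<theta>>\<sigma>. \<exists>M. \<forall>a<p. \<forall>b<m. \<forall>k. \<bar>(C * A ^\<^sub>m k * B) $$ (a, b)\<bar> \<le> M * \<theta> ^ k))"
proof -
  define e where "e x k = complex_of_real ((C * A ^\<^sub>m k * B) $$ x)" for x k
  define I where "I = {..<p} \<times> {..<m}"
  have "finite I" by (simp add: I_def)
  moreover obtain \<mu>s where "\<forall>x\<in>I. shift_subs \<mu>s (e x) = (\<lambda>_. 0)"
    using matrix_power_entries_annihilated[OF C A B] unfolding e_def I_def by auto
  ultimately have "(\<forall>x\<in>I. \<forall>k\<ge>length \<mu>s. e x k = 0) \<or>
    (\<exists>\<sigma>\<in>norm ` set \<mu>s. \<sigma> > 0
       \<and> (\<exists>c>0. \<forall>k. \<exists>x\<in>I. \<exists>j\<le>length \<mu>s. c * \<sigma> ^ k \<le> norm (e x (k + j)))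
       \<and> (\<forall>\<theta>>\<sigma>. \<exists>M. \<forall>x\<in>I. \<forall>k. norm (e x k) \<le> M * \<theta> ^ k))"
    by (rule annihilated_family_dichotomy)
  then show ?thesis
  proof
    assume "\<forall>x\<in>I. \<forall>k\<ge>length \<mu>s. e x k = 0"
    then show ?thesis unfolding e_def I_def by auto
  next
    assume "\<exists>\<sigma>\<in>norm ` set \<mu>s. \<sigma> > 0
       \<and> (\<exists>c>0. \<forall>k. \<exists>x\<in>I. \<exists>j\<le>length \<mu>s. c * \<sigma> ^ k \<le> norm (e x (k + j)))
       \<and> (\<forall>\<theta>>\<sigma>. \<exists>M. \<forall>x\<in>I. \<forall>k. norm (e x k) \<le> M * \<theta> ^ k)"
    then obtain \<sigma> c where \<sigma>: "0 < \<sigma>" and c: "0 < c"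
      and low: "\<forall>k. \<exists>x\<in>I. \<exists>j\<le>length \<mu>s. c * \<sigma> ^ k \<le> norm (e x (k + j))"
      and up: "\<forall>\<theta>>\<sigma>. \<exists>M. \<forall>x\<in>I. \<forall>k. norm (e x k) \<le> M * \<theta> ^ k"
      by blast
    have low': "\<exists>a<p. \<exists>b<m. \<exists>j. c * \<sigma> ^ k \<le> \<bar>(C * A ^\<^sub>m (k + j) * B) $$ (a, b)\<bar>" for k
    proof -
      obtain x j where "x \<in> I" "c * \<sigma> ^ k \<le> norm (e x (k + j))" using low by blast
      then show ?thesis by (cases x) (auto simp: e_def I_def)
    qed
    have "\<exists>M. \<forall>a<p. \<forall>b<m. \<forall>k. \<bar>(C * A ^\<^sub>m k * B) $$ (a, b)\<bar> \<le> M * \<theta> ^ k" if "\<theta> > \<sigma>" for \<theta>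
    proof -
      obtain M where "\<forall>x\<in>I. \<forall>k. norm (e x k) \<le> M * \<theta> ^ k" using up \<open>\<theta> > \<sigma>\<close> by blast
      then show ?thesis by (intro exI[of _ M]) (auto simp: e_def I_def)
    qed
    moreover have "\<sigma> < 1" using matrix_power_entry_rate_lt_1[OF C A B n sr c \<sigma> low'] .
    ultimately show ?thesis using \<sigma> c low' by blast
  qed
qed

section \<open>Hilbert-Schmidt bounds for the operator norm\<close>

definition hilbert_schmidt :: "(nat \<Rightarrow> nat \<Rightarrow> real) \<Rightarrow> bool" where
  "hilbert_schmidt K \<longleftrightarrow> (\<forall>i. summable (\<lambda>j. (K i j)\<^sup>2)) \<and> summable (\<lambda>i. \<Sum>j. (K i j)\<^sup>2)"

lemma Cauchy_Schwarz_ineq_suminf: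
  fixes a b :: "nat \<Rightarrow> real"
  assumes a: "summable (\<lambda>i. (a i)\<^sup>2)" and b: "summable (\<lambda>i. (b i)\<^sup>2)"
  shows "summable (\<lambda>i. a i * b i)" and "(\<Sum>i. a i * b i)\<^sup>2 \<le> (\<Sum>i. (a i)\<^sup>2) * (\<Sum>i. (b i)\<^sup>2)"
proof -
  have pt: "norm (a i * b i) \<le> (a i)\<^sup>2 + (b i)\<^sup>2" for i
  proof -
    have "2 * (\<bar>a i\<bar> * \<bar>b i\<bar>) \<le> (a i)\<^sup>2 + (b i)\<^sup>2"
      using sum_squares_bound[of "\<bar>a i\<bar>" "\<bar>b i\<bar>"] by (simp add: mult.assoc)
    moreover have "0 \<le> \<bar>a i\<bar> * \<bar>b i\<bar>" by simp
    ultimately show ?thesis unfolding real_norm_def abs_mult by linarith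
  qed
  have "summable (\<lambda>i. norm (a i * b i))"
    by (rule summable_comparison_test'[OF summable_add[OF a b]]) (use pt in simp)
  then show ab: "summable (\<lambda>i. a i * b i)" by (rule summable_norm_cancel)
  have "(\<lambda>N. (\<Sum>i<N. a i * b i)\<^sup>2) \<longlonglongrightarrow> (\<Sum>i. a i * b i)\<^sup>2"
    using summable_LIMSEQ[OF ab] by (rule tendsto_power)
  moreover have "(\<Sum>i<N. a i * b i)\<^sup>2 \<le> (\<Sum>i. (a i)\<^sup>2) * (\<Sum>i. (b i)\<^sup>2)" for N
  proof -
    have "(\<Sum>i<N. a i * b i)\<^sup>2 \<le> (\<Sum>i<N. (a i)\<^sup>2) * (\<Sum>i<N. (b i)\<^sup>2)"
      by (rule Cauchy_Schwarz_ineq_sum)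
    also have "\<dots> \<le> (\<Sum>i. (a i)\<^sup>2) * (\<Sum>i. (b i)\<^sup>2)"
      using a b by (intro mult_mono sum_le_suminf sum_nonneg suminf_nonneg) auto
    finally show ?thesis .
  qed
  ultimately show "(\<Sum>i. a i * b i)\<^sup>2 \<le> (\<Sum>i. (a i)\<^sup>2) * (\<Sum>i. (b i)\<^sup>2)"
    by (intro LIMSEQ_le_const2) auto
qed

lemma hilbert_schmidt_image_le:
  assumes K: "hilbert_schmidt K" and x: "summable (\<lambda>j. (x j)\<^sup>2)" "(\<Sum>j. (x j)\<^sup>2) \<le> 1"
  shows "(\<Sum>i. (\<Sum>j. K i j * x j)\<^sup>2) \<le> (\<Sum>i. \<Sum>j. (K i j)\<^sup>2)"
proof -
  have row: "(\<Sum>j. K i j * x j)\<^sup>2 \<le> (\<Sum>j. (K i j)\<^sup>2)" for i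
  proof -
    have "(\<Sum>j. K i j * x j)\<^sup>2 \<le> (\<Sum>j. (K i j)\<^sup>2) * (\<Sum>j. (x j)\<^sup>2)"
      using K x unfolding hilbert_schmidt_def by (intro Cauchy_Schwarz_ineq_suminf(2)) auto
    also have "\<dots> \<le> (\<Sum>j. (K i j)\<^sup>2)"
      using K x unfolding hilbert_schmidt_def by (intro mult_left_le suminf_nonneg) auto
    finally show ?thesis .
  qed
  have "summable (\<lambda>i. (\<Sum>j. K i j * x j)\<^sup>2)"
    by (rule summable_comparison_test'[of "\<lambda>i. \<Sum>j. (K i j)\<^sup>2"])
      (use K row in \<open>auto simp: hilbert_schmidt_def\<close>)
  then show ?thesis using K row unfolding hilbert_schmidt_def by (intro suminf_le) auto
qed

lemma l2_opnorm_le_hilbert_schmidt: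
  assumes "hilbert_schmidt K"
  shows "l2_opnorm K \<le> sqrt (\<Sum>i. \<Sum>j. (K i j)\<^sup>2)"
  unfolding l2_opnorm_def
proof (rule cSup_least)
  have "sqrt (\<Sum>i. (\<Sum>j. K i j * 0)\<^sup>2)
      \<in> {sqrt (\<Sum>i. (\<Sum>j. K i j * x j)\<^sup>2) | x. summable (\<lambda>j. (x j)\<^sup>2) \<and> (\<Sum>j. (x j)\<^sup>2) \<le> 1}"
    by (intro CollectI exI[of _ "\<lambda>_. 0"]) simp
  then show "{sqrt (\<Sum>i. (\<Sum>j. K i j * x j)\<^sup>2) | x. summable (\<lambda>j. (x j)\<^sup>2) \<and> (\<Sum>j. (x j)\<^sup>2) \<le> 1} \<noteq> {}"
    by (metis empty_iff)
qed (use hilbert_schmidt_image_le[OF assms] in \<open>auto intro: real_sqrt_le_mono\<close>)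

lemma l2_opnorm_ge_image:
  assumes "hilbert_schmidt K" and "summable (\<lambda>j. (x j)\<^sup>2)" and "(\<Sum>j. (x j)\<^sup>2) \<le> 1"
  shows "sqrt (\<Sum>i. (\<Sum>j. K i j * x j)\<^sup>2) \<le> l2_opnorm K"
  unfolding l2_opnorm_def
proof (rule cSup_upper)
  show "bdd_above {sqrt (\<Sum>i. (\<Sum>j. K i j * x j)\<^sup>2) | x. summable (\<lambda>j. (x j)\<^sup>2) \<and> (\<Sum>j. (x j)\<^sup>2) \<le> 1}"
    using hilbert_schmidt_image_le[OF assms(1)]
    by (intro bdd_aboveI[of _ "sqrt (\<Sum>i. \<Sum>j. (K i j)\<^sup>2)"]) (auto intro: real_sqrt_le_mono)
qed (intro CollectI exI[of _ x], use assms(2,3) in simp)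

lemma abs_le_l2_opnorm:
  assumes K: "hilbert_schmidt K"
  shows "\<bar>K r c\<bar> \<le> l2_opnorm K"
proof -
  define x where "x j = (if j = c then 1 else 0 :: real)" for j
  have "(\<lambda>j. (x j)\<^sup>2) = (\<lambda>j. if j = c then 1 else 0)" by (auto simp: x_def)
  then have x: "(\<lambda>j. (x j)\<^sup>2) sums 1" using sums_single[of c "\<lambda>_. 1::real"] by simp
  have "(\<lambda>j. K i j * x j) = (\<lambda>j. if j = c then K i j else 0)" for i by (auto simp: x_def)
  then have Kx: "(\<Sum>j. K i j * x j) = K i c" for i using sums_single[of c "K i"] sums_unique by metis
  have col: "(K i c)\<^sup>2 \<le> (\<Sum>j. (K i j)\<^sup>2)" for i
    using sum_le_suminf[of "\<lambda>j. (K i j)\<^sup>2" "{c}"] K unfolding hilbert_schmidt_def by auto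
  have "summable (\<lambda>i. (K i c)\<^sup>2)"
    by (rule summable_comparison_test'[of "\<lambda>i. \<Sum>j. (K i j)\<^sup>2"])
      (use K col in \<open>auto simp: hilbert_schmidt_def\<close>)
  then have "(K r c)\<^sup>2 \<le> (\<Sum>i. (K i c)\<^sup>2)" using sum_le_suminf[of "\<lambda>i. (K i c)\<^sup>2" "{r}"] by simp
  then have "\<bar>K r c\<bar> \<le> sqrt (\<Sum>i. (K i c)\<^sup>2)" by (metis real_sqrt_abs real_sqrt_le_mono)
  also have "(\<Sum>i. (K i c)\<^sup>2) = (\<Sum>i. (\<Sum>j. K i j * x j)\<^sup>2)" by (simp only: Kx)
  also have "sqrt \<dots> \<le> l2_opnorm K"
    by (rule l2_opnorm_ge_image[OF K]) (use x in \<open>simp_all add: sums_iff\<close>)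
  finally show ?thesis .
qed

lemma hilbert_schmidt_rank2_dominated:
  fixes u1 v1 u2 v2 :: "nat \<Rightarrow> real"
  assumes u1: "summable (\<lambda>i. (u1 i)\<^sup>2)" and v1: "summable (\<lambda>j. (v1 j)\<^sup>2)"
    and u2: "summable (\<lambda>i. (u2 i)\<^sup>2)" and v2: "summable (\<lambda>j. (v2 j)\<^sup>2)"
    and K: "\<And>i j. \<bar>K i j\<bar> \<le> u1 i * v1 j + u2 i * v2 j"
  shows "hilbert_schmidt K"
    and "(\<Sum>i. \<Sum>j. (K i j)\<^sup>2)
      \<le> 2 * ((\<Sum>i. (u1 i)\<^sup>2) * (\<Sum>j. (v1 j)\<^sup>2) + (\<Sum>i. (u2 i)\<^sup>2) * (\<Sum>j. (v2 j)\<^sup>2))"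
proof -
  define U1 V1 U2 V2 where "U1 = (\<Sum>i. (u1 i)\<^sup>2)" and "V1 = (\<Sum>j. (v1 j)\<^sup>2)"
    and "U2 = (\<Sum>i. (u2 i)\<^sup>2)" and "V2 = (\<Sum>j. (v2 j)\<^sup>2)"
  have pt: "(K i j)\<^sup>2 \<le> 2 * (u1 i)\<^sup>2 * (v1 j)\<^sup>2 + 2 * (u2 i)\<^sup>2 * (v2 j)\<^sup>2" for i j
  proof -
    have "(K i j)\<^sup>2 \<le> (u1 i * v1 j + u2 i * v2 j)\<^sup>2"
      using power_mono[OF K[of i j] abs_ge_zero, of 2] by simp
    moreover have "0 \<le> (u1 i * v1 j - u2 i * v2 j)\<^sup>2" by simp
    ultimately show ?thesis by (simp add: power2_eq_square algebra_simps)
  qed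
  have rows: "(\<lambda>j. 2 * (u1 i)\<^sup>2 * (v1 j)\<^sup>2 + 2 * (u2 i)\<^sup>2 * (v2 j)\<^sup>2) sums (2 * (u1 i)\<^sup>2 * V1 + 2 * (u2 i)\<^sup>2 * V2)" for i
    unfolding V1_def V2_def using v1 v2 by (intro sums_add sums_mult summable_sums)
  have row: "summable (\<lambda>j. (K i j)\<^sup>2)" "(\<Sum>j. (K i j)\<^sup>2) \<le> 2 * (u1 i)\<^sup>2 * V1 + 2 * (u2 i)\<^sup>2 * V2" for i
  proof -
    show sK: "summable (\<lambda>j. (K i j)\<^sup>2)"
      by (rule summable_comparison_test'[OF sums_summable[OF rows]], simp only: real_norm_def abs_power2, rule pt)
    have "(\<Sum>j. (K i j)\<^sup>2) \<le> (\<Sum>j. 2 * (u1 i)\<^sup>2 * (v1 j)\<^sup>2 + 2 * (u2 i)\<^sup>2 * (v2 j)\<^sup>2)"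
      by (rule suminf_le[OF pt sK sums_summable[OF rows]])
    also have "\<dots> = 2 * (u1 i)\<^sup>2 * V1 + 2 * (u2 i)\<^sup>2 * V2" using rows by (rule sums_unique[symmetric])
    finally show "(\<Sum>j. (K i j)\<^sup>2) \<le> 2 * (u1 i)\<^sup>2 * V1 + 2 * (u2 i)\<^sup>2 * V2" .
  qed
  have cols: "(\<lambda>i. 2 * (u1 i)\<^sup>2 * V1 + 2 * (u2 i)\<^sup>2 * V2) sums (2 * U1 * V1 + 2 * U2 * V2)"
    unfolding U1_def U2_def using u1 u2 by (intro sums_add sums_mult2 sums_mult summable_sums)
  have sK: "summable (\<lambda>i. \<Sum>j. (K i j)\<^sup>2)"
    by (rule summable_comparison_test'[OF sums_summable[OF cols]])
      (use row in \<open>simp add: suminf_nonneg\<close>)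
  then show "hilbert_schmidt K" using row(1) by (simp add: hilbert_schmidt_def)
  have "(\<Sum>i. \<Sum>j. (K i j)\<^sup>2) \<le> (\<Sum>i. 2 * (u1 i)\<^sup>2 * V1 + 2 * (u2 i)\<^sup>2 * V2)"
    by (rule suminf_le[OF row(2) sK sums_summable[OF cols]])
  also have "\<dots> = 2 * U1 * V1 + 2 * U2 * V2" using cols by (rule sums_unique[symmetric])
  finally have "(\<Sum>i. \<Sum>j. (K i j)\<^sup>2) \<le> 2 * U1 * V1 + 2 * U2 * V2" .
  then show "(\<Sum>i. \<Sum>j. (K i j)\<^sup>2) \<le> 2 * (U1 * V1 + U2 * V2)" by simp
qed

section \<open>The tail of the Hankel operator\<close>

definition hankel_tail :: "real mat \<Rightarrow> real mat \<Rightarrow> real mat \<Rightarrow> nat \<Rightarrow> nat \<Rightarrow> nat \<Rightarrow> real" where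
  "hankel_tail C A B d r c = hankel_fin C A B d d r c - hankel_entry C A B r c"

lemma hankel_tail_eq:
  assumes "C \<in> carrier_mat p n" and "B \<in> carrier_mat n m"
  shows "hankel_tail C A B d r c = (if r div p < d \<and> c div m < d then 0
           else - (C * A ^\<^sub>m (r div p + c div m) * B) $$ (r mod p, c mod m))"
  using assms unfolding hankel_tail_def hankel_fin_def hankel_entry_def Let_def by auto

lemma summable_power_div:
  fixes x :: real
  assumes "0 < x" and "x < 1" and "0 < q"
  shows "summable (\<lambda>i. x ^ (i div q))"
proof -
  define \<eta> where "\<eta> = root q x"
  have \<eta>: "0 < \<eta>" "\<eta> < 1" "\<eta> ^ q = x" using assms by (auto simp: \<eta>_def)
  have bound: "x ^ (i div q) \<le> \<eta> ^ i / x" for i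
  proof -
    have "i \<le> q * (i div q) + q" using assms(3) by (metis div_mult_mod_eq add_le_cancel_left mod_less_divisor nat_less_le mult.commute)
    then have "\<eta> ^ (q * (i div q) + q) \<le> \<eta> ^ i" using \<eta> by (intro power_decreasing) auto
    then have "x ^ (i div q) * x \<le> \<eta> ^ i" by (simp add: power_add power_mult \<eta>(3))
    then show ?thesis using assms by (simp add: field_simps)
  qed
  have "summable (\<lambda>i. \<eta> ^ i / x)" using \<eta> by (intro summable_divide summable_geometric) simp
  then show ?thesis by (rule summable_comparison_test') (use bound assms in simp)
qed

text \<open>Off the leading \<open>d \<times> d\<close> block one of the block indices is at least \<open>d\<close>, which
  yields the factor \<open>\<theta> ^ d\<close> in a rank-two majorant.\<close>

lemma hankel_tail_abs_le:
  fixes C A B :: "real mat"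
  assumes C: "C \<in> carrier_mat p n" and B: "B \<in> carrier_mat n m" and "p > 0" and "m > 0"
    and \<theta>: "0 < \<theta>" "\<theta> \<le> 1" and \<psi>: "0 \<le> \<psi>" and M: "0 \<le> M"
    and decay: "\<And>a b k. a < p \<Longrightarrow> b < m \<Longrightarrow> \<bar>(C * A ^\<^sub>m k * B) $$ (a, b)\<bar> \<le> M * (\<theta> * \<psi>) ^ k"
  shows "\<bar>hankel_tail C A B d r c\<bar>
    \<le> M * \<theta> ^ d * \<psi> ^ (r div p) * (\<theta> * \<psi>) ^ (c div m) + (\<theta> * \<psi>) ^ (r div p) * (M * \<theta> ^ d * \<psi> ^ (c div m))"
    (is "_ \<le> ?u + ?v")
proof -
  let ?I = "r div p" and ?J = "c div m"
  have "0 \<le> ?u" "0 \<le> ?v" using \<theta> \<psi> M by simp_all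
  show ?thesis
  proof (cases "?I < d \<and> ?J < d")
    case True
    then show ?thesis using \<open>0 \<le> ?u\<close> \<open>0 \<le> ?v\<close> by (simp add: hankel_tail_eq[OF C B])
  next
    case False
    have "hankel_tail C A B d r c = - (C * A ^\<^sub>m (?I + ?J) * B) $$ (r mod p, c mod m)"
      unfolding hankel_tail_eq[OF C B] using False by (rule if_not_P)
    then have "\<bar>hankel_tail C A B d r c\<bar> \<le> M * (\<theta> * \<psi>) ^ (?I + ?J)"
      using decay[of "r mod p" "c mod m" "?I + ?J"] assms(3,4) by simp
    also have "\<dots> \<le> ?u + ?v"
    proof (cases "d \<le> ?I")
      case True
      have "M * (\<theta> * \<psi>) ^ (?I + ?J) = M * \<theta> ^ ?I * \<psi> ^ ?I * (\<theta> * \<psi>) ^ ?J"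
        by (simp add: power_add power_mult_distrib)
      also have "\<dots> \<le> ?u" using True \<theta> \<psi> M by (intro mult_right_mono mult_left_mono power_decreasing) auto
      finally show ?thesis using \<open>0 \<le> ?v\<close> by linarith
    next
      case False
      then have "d \<le> ?J" using \<open>\<not> (?I < d \<and> ?J < d)\<close> by linarith
      have "M * (\<theta> * \<psi>) ^ (?I + ?J) = (\<theta> * \<psi>) ^ ?I * (M * \<theta> ^ ?J * \<psi> ^ ?J)"
        by (simp add: power_add power_mult_distrib)
      also have "\<dots> \<le> ?v" using \<open>d \<le> ?J\<close> \<theta> \<psi> M by (intro mult_left_mono mult_right_mono power_decreasing) auto
      finally show ?thesis using \<open>0 \<le> ?u\<close> by linarith
    qed
    finally show ?thesis .
  qed
qed

lemma hankel_tail_hilbert_schmidt: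
  fixes C A B :: "real mat"
  assumes C: "C \<in> carrier_mat p n" and B: "B \<in> carrier_mat n m" and "p > 0" and "m > 0"
    and \<theta>: "0 < \<theta>\<^sub>1" "\<theta>\<^sub>1 < \<theta>" "\<theta> < 1"
    and decay: "\<And>a b k. a < p \<Longrightarrow> b < m \<Longrightarrow> \<bar>(C * A ^\<^sub>m k * B) $$ (a, b)\<bar> \<le> M * \<theta>\<^sub>1 ^ k"
  shows "\<exists>M'. \<forall>d. hilbert_schmidt (hankel_tail C A B d) \<and> l2_opnorm (hankel_tail C A B d) \<le> M' * \<theta> ^ d"
proof -
  have "\<bar>(C * A ^\<^sub>m 0 * B) $$ (0, 0)\<bar> \<le> M * \<theta>\<^sub>1 ^ 0" using decay assms(3,4) by blast
  then have M: "0 \<le> M" by simp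
  have \<theta>\<^sub>1: "\<theta>\<^sub>1 < 1" using \<theta> by linarith
  define \<psi> where "\<psi> = \<theta>\<^sub>1 / \<theta>"
  have \<psi>: "0 < \<psi>" "\<psi> < 1" and \<theta>\<psi>: "\<theta> * \<psi> = \<theta>\<^sub>1" using \<theta> by (auto simp: \<psi>_def)
  define S where "S x q = (\<Sum>i. (x ^ (i div q))\<^sup>2)" for x :: real and q :: nat
  have sq: "summable (\<lambda>i. (x ^ (i div q))\<^sup>2)" if "0 < x" "x < 1" "0 < q" for x :: real and q :: nat
    using summable_power_div[of "x\<^sup>2" q] that by (simp add: power_mult[symmetric] mult.commute power_less_one_iff)
  define Q where "Q = 2 * (S \<psi> p * S \<theta>\<^sub>1 m + S \<theta>\<^sub>1 p * S \<psi> m)"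
  have "hilbert_schmidt (hankel_tail C A B d) \<and> l2_opnorm (hankel_tail C A B d) \<le> M * sqrt Q * \<theta> ^ d" for d
  proof -
    let ?s = "M * \<theta> ^ d"
    have bd: "\<bar>hankel_tail C A B d r c\<bar>
        \<le> (?s * \<psi> ^ (r div p)) * \<theta>\<^sub>1 ^ (c div m) + \<theta>\<^sub>1 ^ (r div p) * (?s * \<psi> ^ (c div m))" for r c
      using hankel_tail_abs_le[OF C B assms(3,4) _ _ _ M, of \<theta> \<psi>] \<theta> \<psi> decay by (simp add: \<theta>\<psi> mult.assoc)
    have sums: "summable (\<lambda>i. (?s * \<psi> ^ (i div q))\<^sup>2)" "(\<Sum>i. (?s * \<psi> ^ (i div q))\<^sup>2) = ?s\<^sup>2 * S \<psi> q"
      if "0 < q" for q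
      using sq[OF \<psi> that] unfolding S_def power_mult_distrib by (auto intro: summable_mult suminf_mult)
    note HS = hilbert_schmidt_rank2_dominated[OF sums(1)[OF assms(3)] sq[OF \<theta>(1) \<theta>\<^sub>1 assms(4)]
        sq[OF \<theta>(1) \<theta>\<^sub>1 assms(3)] sums(1)[OF assms(4)] bd]
    have "(\<Sum>i. \<Sum>j. (hankel_tail C A B d i j)\<^sup>2) \<le> ?s\<^sup>2 * Q"
      using HS(2) by (simp only: sums(2)[OF assms(3)] sums(2)[OF assms(4)]) (simp add: Q_def S_def algebra_simps)
    then have "sqrt (\<Sum>i. \<Sum>j. (hankel_tail C A B d i j)\<^sup>2) \<le> sqrt (?s\<^sup>2 * Q)"
      by (rule real_sqrt_le_mono)
    then have "l2_opnorm (hankel_tail C A B d) \<le> sqrt (?s\<^sup>2 * Q)"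
      using l2_opnorm_le_hilbert_schmidt[OF HS(1)] by linarith
    also have "\<dots> = M * sqrt Q * \<theta> ^ d" using M \<theta> by (simp add: real_sqrt_mult)
    finally show ?thesis using HS(1) by simp
  qed
  then show ?thesis by (intro exI[of _ "M * sqrt Q"]) simp
qed

lemma abs_entry_le_hankel_tail_norm:
  fixes C A B :: "real mat"
  assumes C: "C \<in> carrier_mat p n" and B: "B \<in> carrier_mat n m" and "p > 0" and "m > 0"
    and \<theta>: "0 < \<theta>\<^sub>1" "\<theta>\<^sub>1 < 1"
    and decay: "\<And>a b k. a < p \<Longrightarrow> b < m \<Longrightarrow> \<bar>(C * A ^\<^sub>m k * B) $$ (a, b)\<bar> \<le> M * \<theta>\<^sub>1 ^ k"
    and "a < p" and "b < m" and "d \<le> k"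
  shows "\<bar>(C * A ^\<^sub>m k * B) $$ (a, b)\<bar> \<le> l2_opnorm (hankel_tail C A B d)"
proof -
  have "hilbert_schmidt (hankel_tail C A B d)"
    using hankel_tail_hilbert_schmidt[OF C B assms(3,4) \<theta>(1) _ _ decay, of "(\<theta>\<^sub>1 + 1) / 2"] \<theta> by auto
  moreover have "hankel_tail C A B d (k * p + a) b = - (C * A ^\<^sub>m k * B) $$ (a, b)"
    using assms(8-10) by (simp add: hankel_tail_eq[OF C B])
  ultimately show ?thesis using abs_le_l2_opnorm[of "hankel_tail C A B d" "k * p + a" b] by simp
qed

lemma hankel_tail_norm_bounds:
  fixes C A B :: "real mat"
  assumes C: "C \<in> carrier_mat p n" and B: "B \<in> carrier_mat n m" and p: "p > 0" and m: "m > 0"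
    and \<sigma>: "0 < \<sigma>" "\<sigma> < 1"
    and low: "\<And>k. \<exists>a<p. \<exists>b<m. \<exists>j. c * \<sigma> ^ k \<le> \<bar>(C * A ^\<^sub>m (k + j) * B) $$ (a, b)\<bar>"
    and up: "\<And>\<theta>. \<theta> > \<sigma> \<Longrightarrow> \<exists>M. \<forall>a<p. \<forall>b<m. \<forall>k. \<bar>(C * A ^\<^sub>m k * B) $$ (a, b)\<bar> \<le> M * \<theta> ^ k"
  shows "\<exists>M. \<forall>d. c * \<sigma> ^ d \<le> l2_opnorm (hankel_tail C A B d)
                 \<and> l2_opnorm (hankel_tail C A B d) \<le> M * sqrt \<sigma> ^ d"
proof -
  have "sqrt \<sigma> * sqrt \<sigma> < sqrt \<sigma> * 1" using \<sigma> by (intro mult_strict_left_mono) auto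
  then have "\<sigma> < sqrt \<sigma>" and "sqrt \<sigma> < 1" using \<sigma> by simp_all
  obtain \<theta> where \<theta>: "\<sigma> < \<theta>" "\<theta> < sqrt \<sigma>" using \<open>\<sigma> < sqrt \<sigma>\<close> dense by blast
  then have \<theta>': "0 < \<theta>" "\<theta> < 1" using \<sigma> \<open>sqrt \<sigma> < 1\<close> by linarith+
  obtain M where M: "\<And>a b k. a < p \<Longrightarrow> b < m \<Longrightarrow> \<bar>(C * A ^\<^sub>m k * B) $$ (a, b)\<bar> \<le> M * \<theta> ^ k"
    using up[OF \<theta>(1)] by blast
  obtain M' where "\<forall>d. l2_opnorm (hankel_tail C A B d) \<le> M' * sqrt \<sigma> ^ d"
    using hankel_tail_hilbert_schmidt[OF C B p m \<theta>'(1) \<theta>(2) \<open>sqrt \<sigma> < 1\<close> M] by blast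
  moreover have "c * \<sigma> ^ d \<le> l2_opnorm (hankel_tail C A B d)" for d
  proof -
    obtain a b j where ab: "a < p" "b < m" and "c * \<sigma> ^ d \<le> \<bar>(C * A ^\<^sub>m (d + j) * B) $$ (a, b)\<bar>"
      using low by blast
    moreover have "\<bar>(C * A ^\<^sub>m (d + j) * B) $$ (a, b)\<bar> \<le> l2_opnorm (hankel_tail C A B d)"
      using ab by (intro abs_entry_le_hankel_tail_norm[OF C B p m \<theta>' M]) auto
    ultimately show ?thesis by linarith
  qed
  ultimately show ?thesis by blast
qed

lemma hankel_tail_norm_dichotomy:
  fixes C A B :: "real mat"
  assumes C: "C \<in> carrier_mat p n" and A: "A \<in> carrier_mat n n" and B: "B \<in> carrier_mat n m"
    and p: "p > 0" and n: "n > 0" and m: "m > 0"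
    and sr: "spectral_radius (map_mat complex_of_real A) < 1"
  shows "(\<exists>D\<ge>1. l2_opnorm (hankel_tail C A B D) \<le> 0) \<or>
    (\<exists>\<sigma> c M. 0 < \<sigma> \<and> \<sigma> < 1 \<and> 0 < c \<and> (\<forall>d. c * \<sigma> ^ d \<le> l2_opnorm (hankel_tail C A B d)
       \<and> l2_opnorm (hankel_tail C A B d) \<le> M * sqrt \<sigma> ^ d))"
  using matrix_power_entries_dichotomy[OF C A B n sr]
proof
  assume "\<exists>L. \<forall>a<p. \<forall>b<m. \<forall>k\<ge>L. (C * A ^\<^sub>m k * B) $$ (a, b) = 0"
  then obtain L where "\<And>a b k. a < p \<Longrightarrow> b < m \<Longrightarrow> L \<le> k \<Longrightarrow> (C * A ^\<^sub>m k * B) $$ (a, b) = 0"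
    by blast
  then have "hankel_tail C A B (Suc L) = (\<lambda>_ _. 0)"
    using p m by (intro ext) (auto simp: hankel_tail_eq[OF C B])
  moreover have "hilbert_schmidt (\<lambda>_ _. 0)" by (simp add: hilbert_schmidt_def)
  ultimately have "l2_opnorm (hankel_tail C A B (Suc L)) \<le> 0"
    using l2_opnorm_le_hilbert_schmidt[of "\<lambda>_ _. 0"] by simp
  then show ?thesis by (intro disjI1 exI[of _ "Suc L"]) simp
next
  assume "\<exists>\<sigma> c. 0 < \<sigma> \<and> \<sigma> < 1 \<and> 0 < c
       \<and> (\<forall>k. \<exists>a<p. \<exists>b<m. \<exists>j. c * \<sigma> ^ k \<le> \<bar>(C * A ^\<^sub>m (k + j) * B) $$ (a, b)\<bar>)
       \<and> (\<forall>\<theta>>\<sigma>. \<exists>M. \<forall>a<p. \<forall>b<m. \<forall>k. \<bar>(C * A ^\<^sub>m k * B) $$ (a, b)\<bar> \<le> M * \<theta> ^ k)"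
  then obtain \<sigma> c where \<sigma>: "0 < \<sigma>" "\<sigma> < 1" and c: "0 < c"
    and low: "\<forall>k. \<exists>a<p. \<exists>b<m. \<exists>j. c * \<sigma> ^ k \<le> \<bar>(C * A ^\<^sub>m (k + j) * B) $$ (a, b)\<bar>"
    and up: "\<forall>\<theta>>\<sigma>. \<exists>M. \<forall>a<p. \<forall>b<m. \<forall>k. \<bar>(C * A ^\<^sub>m k * B) $$ (a, b)\<bar> \<le> M * \<theta> ^ k"
    by blast
  have "\<exists>M. \<forall>d. c * \<sigma> ^ d \<le> l2_opnorm (hankel_tail C A B d)
                 \<and> l2_opnorm (hankel_tail C A B d) \<le> M * sqrt \<sigma> ^ d"
    by (rule hankel_tail_norm_bounds[OF C B p m \<sigma>]) (use low up in auto)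
  then show ?thesis using \<sigma> c by blast
qed

section \<open>The threshold dimension\<close>

lemma threshold_tendsto_0:
  assumes "0 < \<delta>"
  shows "((\<lambda>t. K * sqrt (real d) * sqrt ((q * real d + ln (t / \<delta>)) / t)) \<longlongrightarrow> 0) at_top"
  using assms by real_asymp

lemma threshold_eventually_less_power:
  assumes "0 < K" and "0 < c" and "0 < l" and "0 < b"
  shows "eventually (\<lambda>t. K * sqrt (9/20 * ln t / l) * sqrt ((b * ln t + Q) / t) < c * t powr (-9/20)) at_top"
  using assms by real_asymp

lemma eventually_at_top_divide_const:
  assumes "0 < c" and "eventually P at_top"
  shows "eventually (\<lambda>t::real. P (t / c)) at_top"
proof -
  have "filterlim (\<lambda>t::real. t / c) at_top at_top" using assms(1) by real_asymp
  from filterlim_iff[THEN iffD1, OF this, rule_format, OF assms(2)] show ?thesis .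
qed

definition admissible_dims :: "(nat \<Rightarrow> real) \<Rightarrow> real \<Rightarrow> real \<Rightarrow> real \<Rightarrow> real \<Rightarrow> nat set" where
  "admissible_dims g K q \<delta> T =
     {d. d \<ge> 1 \<and> K * sqrt (real d) * sqrt ((q * real d + ln (T / \<delta>)) / T) \<ge> g d}"

lemma d_star_eq:
  "d_star C A B Cc \<beta> R T \<delta>
     = Inf (admissible_dims (\<lambda>d. l2_opnorm (hankel_tail C A B d)) (Cc * \<beta> * R) (real (dim_row C)) \<delta> T)"
  unfolding d_star_def admissible_dims_def hankel_tail_def ..

lemma Inf_admissible_dims_eventually_const:
  assumes "0 < \<delta>" and "0 \<le> q" and "0 \<le> K" and "1 \<le> D\<^sub>0" and "g D\<^sub>0 \<le> 0"
  shows "\<exists>D. eventually (\<lambda>t. Inf (admissible_dims g K q \<delta> t) = D) at_top"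
proof -
  define D where "D = (LEAST d. 1 \<le> d \<and> g d \<le> 0)"
  have D: "1 \<le> D" "g D \<le> 0" using LeastI[of "\<lambda>d. 1 \<le> d \<and> g d \<le> 0" D\<^sub>0] assms(4,5) by (auto simp: D_def)
  have "0 < g d" if "1 \<le> d" "d < D" for d
    using not_less_Least[of d "\<lambda>d. 1 \<le> d \<and> g d \<le> 0"] that unfolding D_def by force
  then have "eventually (\<lambda>t. \<forall>d\<in>{1..<D}. K * sqrt (real d) * sqrt ((q * real d + ln (t / \<delta>)) / t) < g d) at_top"
    using threshold_tendsto_0[OF assms(1)] by (intro eventually_ball_finite ballI order_tendstoD(2)) auto
  moreover have "eventually (\<lambda>t. \<delta> \<le> t) at_top" by (rule eventually_ge_at_top)
  ultimately have "eventually (\<lambda>t. Inf (admissible_dims g K q \<delta> t) = D) at_top"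
  proof eventually_elim
    case (elim t)
    have "0 \<le> K * sqrt (real D) * sqrt ((q * real D + ln (t / \<delta>)) / t)"
      using elim(2) assms(1-3) by (intro mult_nonneg_nonneg) auto
    then have "D \<in> admissible_dims g K q \<delta> t" using D by (simp add: admissible_dims_def)
    moreover have "D \<le> d" if "d \<in> admissible_dims g K q \<delta> t" for d
      using that elim(1) by (force simp: admissible_dims_def not_le[symmetric])
    ultimately show ?case by (rule cInf_eq_minimum)
  qed
  then show ?thesis ..
qed

lemma inverse_sqrt_le_threshold:
  assumes "1 \<le> d" and "0 \<le> q" and "0 \<le> K" and "0 < \<delta>" and "exp 1 * \<delta> \<le> t"
  shows "K / sqrt t \<le> K * sqrt (real d) * sqrt ((q * real d + ln (t / \<delta>)) / t)"
proof -
  have t: "0 < t" using assms(4,5) by (smt (verit) exp_gt_zero mult_pos_pos)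
  have "exp 1 \<le> t / \<delta>" using assms(4,5) by (simp add: pos_le_divide_eq)
  then have "1 \<le> ln (t / \<delta>)" using t assms(4) by (metis divide_pos_pos ln_exp ln_le_cancel_iff exp_gt_zero)
  then have "1 \<le> q * real d + ln (t / \<delta>)" using assms(2) by (simp add: add_increasing)
  then have "1 / t \<le> (q * real d + ln (t / \<delta>)) / t" using t by (intro divide_right_mono) auto
  then have "1 * sqrt (1 / t) \<le> sqrt (real d) * sqrt ((q * real d + ln (t / \<delta>)) / t)"
    using assms(1) t by (intro mult_mono real_sqrt_le_mono) auto
  then have "K * sqrt (1 / t) \<le> K * (sqrt (real d) * sqrt ((q * real d + ln (t / \<delta>)) / t))"
    using assms(3) by (simp add: mult_left_mono)
  then show ?thesis by (simp add: real_sqrt_divide mult.assoc)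
qed

lemma threshold_mono:
  assumes "real d \<le> x" and "0 \<le> q" and "0 \<le> K" and "0 < \<delta>" and "\<delta> \<le> t"
  shows "K * sqrt (real d) * sqrt ((q * real d + ln (t / \<delta>)) / t)
           \<le> K * sqrt x * sqrt ((q * x + ln (t / \<delta>)) / t)"
proof -
  have t: "0 < t" "0 \<le> ln (t / \<delta>)" using assms(4,5) by auto
  have "q * real d \<le> q * x" using assms(1,2) by (rule mult_left_mono)
  then have "sqrt ((q * real d + ln (t / \<delta>)) / t) \<le> sqrt ((q * x + ln (t / \<delta>)) / t)"
    using t by (intro real_sqrt_le_mono divide_right_mono) auto
  moreover have "0 \<le> sqrt ((q * real d + ln (t / \<delta>)) / t)"
    using assms(2) t by (intro real_sqrt_ge_zero divide_nonneg_pos add_nonneg_nonneg mult_nonneg_nonneg) auto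
  moreover have "K * sqrt (real d) \<le> K * sqrt x" using assms(1,3) by (intro mult_left_mono real_sqrt_le_mono)
  ultimately show ?thesis using assms(1,3) by (intro mult_mono) auto
qed

lemma Inf_admissible_dims_le:
  assumes \<theta>: "0 < \<theta>" "\<theta> < 1" and M: "0 < M" and K: "0 < K" and "0 \<le> q" and "0 < \<delta>"
    and g: "\<And>d. g d \<le> M * \<theta> ^ d"
  shows "eventually (\<lambda>t. admissible_dims g K q \<delta> t \<noteq> {}
           \<and> real (Inf (admissible_dims g K q \<delta> t)) \<le> (ln t / 2 + ln (M / K)) / (- ln \<theta>) + 2) at_top"
proof -
  define l where "l = - ln \<theta>"
  have l: "0 < l" using \<theta> by (simp add: l_def)
  have "eventually (\<lambda>t. - 2 * ln (M / K) \<le> ln t) at_top"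
    using ln_at_top by (simp add: filterlim_at_top)
  moreover have "eventually (\<lambda>t. exp 1 * \<delta> \<le> t) at_top" by (rule eventually_ge_at_top)
  ultimately show ?thesis unfolding l_def[symmetric]
  proof eventually_elim
    case (elim t)
    have t: "0 < t" using elim(2) \<open>0 < \<delta>\<close> by (smt (verit) exp_gt_zero mult_pos_pos)
    define x where "x = (ln t / 2 + ln (M / K)) / l"
    define d where "d = nat \<lceil>x\<rceil> + 1"
    have "0 \<le> x" using elim(1) l by (simp add: x_def)
    then have x: "x \<le> real d" "real d \<le> x + 2"
      unfolding d_def using of_int_ceiling_le_add_one[of x] by linarith+
    have "\<theta> ^ d = exp (real d * ln \<theta>)" using \<theta> by (simp add: exp_of_nat_mult)
    then have "g d \<le> M * exp (- (l * real d))" using g[of d] by (simp add: l_def mult.commute)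
    also have "\<dots> \<le> M * exp (- (ln t / 2 + ln (M / K)))"
      using x(1) l M by (simp add: x_def pos_divide_le_eq mult.commute)
    also have "\<dots> = K / sqrt t"
    proof -
      have "exp (- (ln t / 2 + ln (M / K))) = inverse (exp (ln t / 2)) * inverse (exp (ln (M / K)))"
        by (simp only: minus_add_distrib exp_add exp_minus)
      also have "\<dots> = inverse (sqrt t) * (K / M)" using t M K by (simp flip: ln_sqrt)
      finally show ?thesis using M by (simp add: field_simps)
    qed
    also have "\<dots> \<le> K * sqrt (real d) * sqrt ((q * real d + ln (t / \<delta>)) / t)"
      using elim(2) K assms(5,6) by (intro inverse_sqrt_le_threshold) (auto simp: d_def)
    finally have d: "d \<in> admissible_dims g K q \<delta> t" by (simp add: admissible_dims_def d_def)
    have "Inf (admissible_dims g K q \<delta> t) \<le> d" by (rule cInf_lower[OF d]) simp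
    then show ?case using d x(2) unfolding x_def by auto
  qed
qed

lemma admissible_dims_eventually_gt:
  assumes \<sigma>: "0 < \<sigma>" "\<sigma> < 1" and c: "0 < c" and K: "0 < K" and q: "0 \<le> q" and \<delta>: "0 < \<delta>"
    and g: "\<And>d. c * \<sigma> ^ d \<le> g d"
  shows "eventually (\<lambda>t. \<forall>d\<in>admissible_dims g K q \<delta> t. 9/20 * ln t / (- ln \<sigma>) < real d) at_top"
proof -
  define l where "l = - ln \<sigma>"
  have l: "0 < l" using \<sigma> by (simp add: l_def)
  define b where "b = q * (9/20) / l + 1"
  have b: "0 < b" using l q by (simp add: b_def add_nonneg_pos)
  have "eventually (\<lambda>t. K * sqrt (9/20 * ln t / l) * sqrt ((b * ln t + - ln \<delta>) / t) < c * t powr (-9/20)) at_top"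
    by (rule threshold_eventually_less_power[OF K c l b])
  moreover have "eventually (\<lambda>t. max 1 \<delta> \<le> t) at_top" by (rule eventually_ge_at_top)
  ultimately show ?thesis unfolding l_def[symmetric]
  proof eventually_elim
    case (elim t)
    have t: "0 < t" "0 \<le> ln t" "\<delta> \<le> t" using elim(2) \<delta> by auto
    show ?case
    proof (rule ballI, rule ccontr)
      fix d assume "d \<in> admissible_dims g K q \<delta> t" and "\<not> 9/20 * ln t / l < real d"
      then have d: "g d \<le> K * sqrt (real d) * sqrt ((q * real d + ln (t / \<delta>)) / t)"
        and dle: "real d \<le> 9/20 * ln t / l"
        by (auto simp: admissible_dims_def)
      have "q * (9/20 * ln t / l) + ln (t / \<delta>) = b * ln t + - ln \<delta>"
        using t \<delta> l by (simp add: b_def ln_div field_simps)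
      then have "g d \<le> K * sqrt (9/20 * ln t / l) * sqrt ((b * ln t + - ln \<delta>) / t)"
        using d threshold_mono[OF dle q less_imp_le[OF K] \<delta> t(3)] by simp
      also have "\<dots> < c * t powr (-9/20)" by (rule elim(1))
      also have "\<dots> \<le> c * \<sigma> ^ d"
      proof -
        have "l * real d \<le> 9/20 * ln t" using dle l by (simp add: le_divide_eq mult_ac)
        moreover have "\<sigma> ^ d = exp (real d * ln \<sigma>)" using \<sigma> by (simp add: exp_of_nat_mult)
        then have "\<sigma> ^ d = exp (- (l * real d))" by (simp add: l_def mult.commute)
        moreover have "t powr (-9/20) = exp (- (9/20 * ln t))" using t by (simp add: powr_def)
        ultimately show ?thesis using c by simp
      qed
      also have "\<dots> \<le> g d" by (rule g)
      finally show False by simp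
    qed
  qed
qed

lemma Inf_admissible_dims_ratio_vanishing:
  assumes "0 < \<delta>" and "0 \<le> q" and "0 \<le> K" and "1 \<le> D\<^sub>0" and "g D\<^sub>0 \<le> 0" and "8 \<le> \<kappa>"
  shows "eventually (\<lambda>t. real (Inf (admissible_dims g K q \<delta> t))
           \<le> \<kappa> * real (Inf (admissible_dims g K q \<delta> (t / \<kappa>\<^sup>2))) / 8) at_top"
proof -
  obtain D where D: "eventually (\<lambda>t. Inf (admissible_dims g K q \<delta> t) = D) at_top"
    using Inf_admissible_dims_eventually_const[where g = g, OF assms(1-5)] by blast
  moreover have "eventually (\<lambda>t. Inf (admissible_dims g K q \<delta> (t / \<kappa>\<^sup>2)) = D) at_top"
    using assms(6) D by (intro eventually_at_top_divide_const) auto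
  ultimately show ?thesis
  proof eventually_elim
    case (elim t)
    have "8 * real D \<le> \<kappa> * real D" using assms(6) by (intro mult_right_mono) auto
    then show ?case using elim by simp
  qed
qed

text \<open>For \<open>d\<close> below \<open>(9/20) log t / log (1/\<sigma>)\<close> the lower bound \<open>c \<sigma> ^ d\<close> exceeds the threshold,
  while \<open>M (sqrt \<sigma>) ^ d\<close> drops below it once \<open>d\<close> is about \<open>log t / log (1/\<sigma>)\<close>; the ratio
  \<open>20/9 < 5/2 \<le> \<kappa>/8\<close> leaves room for replacing \<open>t\<close> by \<open>t / \<kappa>\<^sup>2\<close>.\<close>

lemma Inf_admissible_dims_ratio:
  assumes \<sigma>: "0 < \<sigma>" "\<sigma> < 1" and c: "0 < c" and M: "0 < M" and K: "0 < K" and q: "0 \<le> q"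
    and \<delta>: "0 < \<delta>" and \<kappa>: "20 \<le> \<kappa>"
    and low: "\<And>d. c * \<sigma> ^ d \<le> g d" and up: "\<And>d. g d \<le> M * sqrt \<sigma> ^ d"
  shows "eventually (\<lambda>t. real (Inf (admissible_dims g K q \<delta> t))
           \<le> \<kappa> * real (Inf (admissible_dims g K q \<delta> (t / \<kappa>\<^sup>2))) / 8) at_top"
proof -
  let ?S = "admissible_dims g K q \<delta>"
  define l where "l = - ln \<sigma>"
  have l: "0 < l" using \<sigma> by (simp add: l_def)
  have ln_sqrt_\<sigma>: "- ln (sqrt \<sigma>) = l / 2" using \<sigma> by (simp add: l_def ln_sqrt)
  have "eventually (\<lambda>t. ?S t \<noteq> {}
      \<and> real (Inf (?S t)) \<le> (ln t / 2 + ln (M / K)) / (- ln (sqrt \<sigma>)) + 2) at_top"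
    by (rule Inf_admissible_dims_le) (use \<sigma> M K q \<delta> up in auto)
  then have upper: "eventually (\<lambda>t. ?S t \<noteq> {}
      \<and> real (Inf (?S t)) \<le> (ln t / 2 + ln (M / K)) / (l / 2) + 2) at_top"
    unfolding ln_sqrt_\<sigma> .
  have "eventually (\<lambda>t. 9/20 * ln t / l < real (Inf (?S t))) at_top"
    using upper admissible_dims_eventually_gt[OF \<sigma> c K q \<delta> low] unfolding l_def
    by eventually_elim (use Inf_nat_def1 in blast)
  then have "eventually (\<lambda>t. 9/20 * ln (t / \<kappa>\<^sup>2) / l < real (Inf (?S (t / \<kappa>\<^sup>2)))) at_top"
    using \<kappa> by (intro eventually_at_top_divide_const) auto
  moreover have "eventually (\<lambda>t. 8 * (2 * ln (M / K) + 2 * l) + 9 * ln (\<kappa>\<^sup>2) \<le> ln t) at_top"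
    using ln_at_top by (simp add: filterlim_at_top)
  moreover have "eventually (\<lambda>t::real. 0 < t) at_top" by (rule eventually_gt_at_top)
  ultimately show ?thesis using upper
  proof eventually_elim
    case (elim t)
    have "real (Inf (?S t)) \<le> (ln t / 2 + ln (M / K)) / (l / 2) + 2" using elim(4) by simp
    also have "\<dots> = (ln t + 2 * ln (M / K) + 2 * l) / l" using l by (simp add: field_simps)
    also have "\<dots> \<le> 5/2 * (9/20 * (ln t - ln (\<kappa>\<^sup>2))) / l"
      using elim(2) l by (intro divide_right_mono) (simp_all add: algebra_simps)
    also have "\<dots> = 5/2 * (9/20 * ln (t / \<kappa>\<^sup>2) / l)" using elim(3) \<kappa> by (simp add: ln_div)
    also have "\<dots> \<le> 5/2 * real (Inf (?S (t / \<kappa>\<^sup>2)))" using elim(1) by linarith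
    also have "\<dots> \<le> \<kappa> / 8 * real (Inf (?S (t / \<kappa>\<^sup>2)))" using \<kappa> by (intro mult_right_mono) auto
    also have "\<dots> = \<kappa> * real (Inf (?S (t / \<kappa>\<^sup>2))) / 8" by simp
    finally show ?case .
  qed
qed

lemma T2_finite_if_eventually:
  assumes "eventually (\<lambda>t. real (d_star C A B Cc \<beta> R t \<delta>)
             \<le> \<kappa> * real (d_star C A B Cc \<beta> R (t / \<kappa>\<^sup>2) \<delta>) / 8) at_top"
  shows "T2 C A B Cc \<beta> R \<kappa> \<delta> < \<infinity>"
proof -
  obtain N where N: "\<And>t. N \<le> t \<Longrightarrow>
      real (d_star C A B Cc \<beta> R t \<delta>) \<le> \<kappa> * real (d_star C A B Cc \<beta> R (t / \<kappa>\<^sup>2) \<delta>) / 8"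
    using assms by (auto simp: eventually_at_top_linorder)
  have "ereal (max N 1) \<in> {ereal T | T. T > 0 \<and> (\<forall>t \<ge> T.
      real (d_star C A B Cc \<beta> R t \<delta>) \<le> \<kappa> * real (d_star C A B Cc \<beta> R (t / \<kappa>\<^sup>2) \<delta>) / 8)}"
    using N by (intro CollectI exI[of _ "max N 1"]) auto
  then have "T2 C A B Cc \<beta> R \<kappa> \<delta> \<le> ereal (max N 1)" unfolding T2_def by (rule Inf_lower)
  then show ?thesis by (rule order.strict_trans1) (simp add: max_def)
qed

theorem proposition17:
  fixes C A B :: "real mat" and n p m :: nat and Cc \<beta> R \<kappa> \<delta> :: real
  assumes "C \<in> carrier_mat p n" and "A \<in> carrier_mat n n" and "B \<in> carrier_mat n m"
    and "p > 0" and "n > 0" and "m > 0"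
    and "spectral_radius (map_mat complex_of_real A) < 1"
    and "\<kappa> \<ge> 20" and "\<delta> > 0" and "Cc > 0" and "\<beta> > 0" and "R > 0"
  shows "T2 C A B Cc \<beta> R \<kappa> \<delta> < \<infinity>"
proof (rule T2_finite_if_eventually)
  let ?g = "\<lambda>d. l2_opnorm (hankel_tail C A B d)" and ?K = "Cc * \<beta> * R"
  have K: "0 < ?K" and p: "real (dim_row C) = real p" using assms by auto
  have "eventually (\<lambda>t. real (Inf (admissible_dims ?g ?K (real p) \<delta> t))
      \<le> \<kappa> * real (Inf (admissible_dims ?g ?K (real p) \<delta> (t / \<kappa>\<^sup>2))) / 8) at_top"
    using hankel_tail_norm_dichotomy[OF assms(1-7)]
  proof (elim disjE exE conjE)
    fix D assume "1 \<le> D" and "?g D \<le> 0"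
    then show ?thesis using assms(8,9) K by (intro Inf_admissible_dims_ratio_vanishing) auto
  next
    fix \<sigma> c M assume "0 < \<sigma>" "\<sigma> < 1" "0 < c" "\<forall>d. c * \<sigma> ^ d \<le> ?g d \<and> ?g d \<le> M * sqrt \<sigma> ^ d"
    then show ?thesis using assms(8,9) K
      by (intro Inf_admissible_dims_ratio[where c = c and M = "max M 1"]) (auto intro: order_trans)
  qed
  then show "eventually (\<lambda>t. real (d_star C A B Cc \<beta> R t \<delta>)
      \<le> \<kappa> * real (d_star C A B Cc \<beta> R (t / \<kappa>\<^sup>2) \<delta>) / 8) at_top"
    unfolding d_star_eq p .
qed

end
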